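(* Suppose all transmitters share a common shaping lattice, $\Lambda_{s,1}=\cdots=\Lambda_{s,L}$. Then $\mathcal{R}_{\mathrm{cpr}}=\mathcal{R}_{\mathrm{SW}}$, where $\mathcal{R}_{\mathrm{cpr}}=\{R\in\mathbb{R}^L:\sum_{m\in\mathcal{S}}R_m\ge f(\mathcal{S})\ \forall\mathcal{S}\subseteq\mathcal{I}_L\}$ with $f(\mathcal{S})=\sum_{k=1}^{2L-1}\big(\operatorname{rank}A(\mathcal{I}_L,\mathcal{L}_k)-\operatorname{rank}A(\overline{\mathcal{S}},\mathcal{L}_k)\big)r_{v,k}$, and $\mathcal{R}_{\mathrm{SW}}=\{R\in\mathbb{R}^L:\sum_{m\in\mathcal{S}}R_m\ge H(\{v_m\}_{m\in\mathcal{S}}\mid\{v_m\}_{m\in\overline{\mathcal{S}}})\ \forall\mathcal{S}\subseteq\mathcal{I}_L\}$ is the Slepian–Wolf region.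
   Context: Notation: for a lattice $\Lambda\subset\mathbb{R}^n$, $Q_\Lambda(x)$ is the nearest point of $\Lambda$ to $x$ (ties broken by a fixed rule), $x\bmod\Lambda=x-Q_\Lambda(x)$, $\mathcal{V}(\Lambda)=\{x:Q_\Lambda(x)=0\}$. $\mathcal{I}_j=\{1,\dots,j\}$, $\mathcal{I}_0=\emptyset$, $\overline{\mathcal{S}}=\mathcal{I}_L\setminus\mathcal{S}$. Logarithms base 2. $H(\cdot)$, $H(\cdot\mid\cdot)$ are $\frac1n$ times Shannon (conditional) entropy in bits; conditioning on an empty collection is unconditional. Lattice chain (Construction A): $\gamma$ prime, $L,n,K$ positive integers, $G\in\mathbb{F}_\gamma^{n\times K}$ of full column rank over $\mathbb{F}_\gamma$, $B\in\mathbb{R}^{n\times n}$ invertible, $g:\mathbb{F}_\gamma\to\{0,\dots,\gamma-1\}$ natural bijection entrywise; for $0\le i_1\le\cdots\le i_{2L}\le K$, $\Lambda_k=B(\gamma^{-1}g(\{G_kw:w\in\mathbb{F}_\gamma^{i_k}\})+\mathbb{Z}^n)$, $G_k$ = first $i_k$ columns of $G$; $\Lambda_1\subseteq\cdots\subseteq\Lambda_{2L}$; $\mathcal{V}_k=\mathcal{V}(\Lambda_k)$; $r_{v,k}=\frac1n\log|\Lambda_{k+1}\cap\mathcal{V}_k|$. Sources: $\pi$ permutation of $\mathcal{I}_{2L}$ with $\Lambda_{\pi(2l-1)}\subseteq\Lambda_{\pi(2l)}$; $\Lambda_{s,l}=\Lambda_{\pi(2l-1)}$, $\Lambda_{c,l}=\Lambda_{\pi(2l)}$,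 $\mathcal{C}_l=\Lambda_{c,l}\cap\mathcal{V}(\Lambda_{s,l})$. $t_1,\dots,t_L$ independent, $t_l$ uniform on $\mathcal{C}_l$; $\beta_l>0$; dithers $d_l$ uniform on $\mathcal{V}(\Lambda_{s,l})/\beta_l$, independent of each other and of the $t_l$. $\mathcal{L}_k=\{l:\Lambda_{s,l}\subseteq\Lambda_k\subseteq\Lambda_{k+1}\subseteq\Lambda_{c,l}\}$. Computed codewords: $A=(a_{ml})\in\mathbb{Z}^{L\times L}$ invertible mod $\gamma$; $A(\mathcal{S},\mathcal{S}')$ submatrix with rows $\mathcal{S}$, columns $\mathcal{S}'$; ranks over $\mathbb{F}_\gamma$ after reduction mod $\gamma$, empty matrices have rank $0$. $v_m=\big(\sum_l a_{ml}(t_l-Q_{\Lambda_{s,l}}(t_l-\beta_ld_l))\big)\bmod\Lambda_1$. *)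

theory Defs
  imports "HOL-Probability.Probability" "HOL-Combinatorics.Permutations"
begin

definition indep_mod :: "nat \<Rightarrow> ('r \<Rightarrow> 'c \<Rightarrow> int) \<Rightarrow> 'r set \<Rightarrow> 'c set \<Rightarrow> bool" where
  "indep_mod p M R J \<longleftrightarrow>
     (\<forall>c::'c \<Rightarrow> int. (\<forall>r\<in>R. (\<Sum>j\<in>J. c j * M r j) mod int p = 0)
         \<longrightarrow> (\<forall>j\<in>J. c j mod int p = 0))"

definition rank_mod :: "nat \<Rightarrow> ('r \<Rightarrow> 'c \<Rightarrow> int) \<Rightarrow> 'r set \<Rightarrow> 'c set \<Rightarrow> nat" where
  "rank_mod p M R C = Max {card J | J. J \<subseteq> C \<and> finite J \<and> indep_mod p M R J}"

text \<open>Construction A lattice  B (gamma^-1 g({G_i w : w in F_gamma^i}) + Z^n), where G_i is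
  the first i columns (columns indexed 1..K) of G.\<close>
definition constrA :: "nat \<Rightarrow> real^'n^'n \<Rightarrow> ('n \<Rightarrow> nat \<Rightarrow> int) \<Rightarrow> nat \<Rightarrow> (real^'n) set" where
  "constrA \<gamma> B G i =
     {B *v ((1 / real \<gamma>) *\<^sub>R (\<chi> r. real_of_int ((\<Sum>j\<in>{1..i}. G r j * w j) mod int \<gamma>))
             + (\<chi> r. real_of_int (z r))) | (w :: nat \<Rightarrow> int) (z :: 'n \<Rightarrow> int). True}"

definition voronoi :: "('v set \<Rightarrow> 'v \<Rightarrow> 'v::zero) \<Rightarrow> 'v set \<Rightarrow> 'v set" where
  "voronoi Q \<Lambda> = {x. Q \<Lambda> x = 0}"

definition modl :: "('v set \<Rightarrow> 'v \<Rightarrow> 'v::minus) \<Rightarrow> 'v set \<Rightarrow> 'v \<Rightarrow> 'v" where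
  "modl Q \<Lambda> x = x - Q \<Lambda> x"

text \<open>Nearest-point quantizer for a lattice with a fixed (translation-consistent) tie rule.\<close>
definition nearest_quantizer :: "(real^'n) set \<Rightarrow> (real^'n \<Rightarrow> real^'n) \<Rightarrow> bool" where
  "nearest_quantizer \<Lambda> q \<longleftrightarrow>
     (\<forall>x. q x \<in> \<Lambda>) \<and> (\<forall>x. \<forall>y\<in>\<Lambda>. dist x (q x) \<le> dist x y) \<and>
     (\<forall>x. \<forall>y\<in>\<Lambda>. q (x + y) = q x + y)"

definition cond_entropy_bits :: "'a measure \<Rightarrow> ('a \<Rightarrow> 'b) \<Rightarrow> ('a \<Rightarrow> 'c) \<Rightarrow> real" where
  "cond_entropy_bits M X Y =
     - (\<Sum>(x, y) \<in> (\<lambda>\<omega>. (X \<omega>, Y \<omega>)) ` space M.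
          let pxy = measure M {\<omega> \<in> space M. X \<omega> = x \<and> Y \<omega> = y};
              py = measure M {\<omega> \<in> space M. Y \<omega> = y}
          in pxy * log 2 (pxy / py))"

end

(*
  A shaping lattice shared by all users must be the coarsest lattice Lambda_1 of the chain, so
  every dither correction Q(t_l - beta_l d_l) lies in Lambda_1 and disappears modulo Lambda_1: the
  computed codewords are functions of the uniform codewords t_l alone. Writing t_l by its
  Construction A digits, the map t |-> (v_m) for m in R acts, digit level by digit level j, as
  the submatrix of A with rows R and the columns of the users whose fine lattice reaches level j,
  over F_gamma. Its fibres are translates of each other, so the conditional entropy is a
  difference of logarithms of image sizes gamma^rank; grouping the digit levels between
  consecutive lattices of the chain gives f(S).
*)
theory Submission
  imports Defs
begin

lemma eq_if_dvd_diff_bounded: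
  fixes x y g :: int
  shows "0 \<le> x \<Longrightarrow> x < g \<Longrightarrow> 0 \<le> y \<Longrightarrow> y < g \<Longrightarrow> g dvd (x - y) \<Longrightarrow> x = y"
  by (metis mod_pos_pos_trivial mod_eq_dvd_iff)

lemma sum_mod_coeffs:
  fixes g :: int
  shows "(\<Sum>l\<in>J. (c l mod g) * M l) mod g = (\<Sum>l\<in>J. c l * M l) mod g"
proof -
  have "(\<Sum>l\<in>J. (c l mod g) * M l) mod g = (\<Sum>l\<in>J. ((c l mod g) * M l) mod g) mod g"
    by (simp add: mod_sum_eq)
  also have "\<dots> = (\<Sum>l\<in>J. (c l * M l) mod g) mod g" by (simp add: mod_mult_left_eq)
  also have "\<dots> = (\<Sum>l\<in>J. c l * M l) mod g" by (simp add: mod_sum_eq)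
  finally show ?thesis .
qed

section \<open>Nearest-point quantizers and Voronoi regions\<close>

context
  fixes \<Lambda> :: "(real^'n) set" and Q :: "(real^'n) set \<Rightarrow> real^'n \<Rightarrow> real^'n"
  assumes nearest: "nearest_quantizer \<Lambda> (Q \<Lambda>)"
begin

lemma quantizer_in: "Q \<Lambda> x \<in> \<Lambda>"
  using nearest unfolding nearest_quantizer_def by blast

lemma quantizer_add_lattice: "y \<in> \<Lambda> \<Longrightarrow> Q \<Lambda> (x + y) = Q \<Lambda> x + y"
  using nearest unfolding nearest_quantizer_def by blast

lemma quantizer_nearest: "y \<in> \<Lambda> \<Longrightarrow> dist x (Q \<Lambda> x) \<le> dist x y"
  using nearest unfolding nearest_quantizer_def by blast

lemma quantizer_diff_lattice: "y \<in> \<Lambda> \<Longrightarrow> Q \<Lambda> (x - y) = Q \<Lambda> x - y"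
  using quantizer_add_lattice[of y "x - y"] by simp

lemma modl_in_voronoi: "modl Q \<Lambda> x \<in> voronoi Q \<Lambda>"
  using quantizer_diff_lattice[OF quantizer_in, of x x] unfolding modl_def voronoi_def by simp

lemma modl_add_lattice: "y \<in> \<Lambda> \<Longrightarrow> modl Q \<Lambda> (x + y) = modl Q \<Lambda> x"
  unfolding modl_def by (simp add: quantizer_add_lattice)

lemma modl_diff_lattice: "y \<in> \<Lambda> \<Longrightarrow> modl Q \<Lambda> (x - y) = modl Q \<Lambda> x"
  unfolding modl_def by (simp add: quantizer_diff_lattice)

lemma modl_voronoi: "x \<in> voronoi Q \<Lambda> \<Longrightarrow> modl Q \<Lambda> x = x"
  unfolding modl_def voronoi_def by simp

lemma voronoi_sets_lebesgue:
  assumes "countable \<Lambda>" and "0 \<in> \<Lambda>"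
  shows "voronoi Q \<Lambda> \<in> sets lebesgue"
proof -
  define D where "D = {x. \<forall>y\<in>\<Lambda>. norm x \<le> norm (x - y)}"
  have "D = (\<Inter>y\<in>\<Lambda>. {x. norm x \<le> norm (x - y)})" unfolding D_def by auto
  moreover have "closed {x. norm x \<le> norm (x - y)}" for y :: "real^'n"
    by (intro closed_Collect_le continuous_intros)
  ultimately have "closed D" by auto
  hence D_sets: "D \<in> sets lebesgue"
    using lebesgue_closedin[of UNIV D] by simp
  have sub: "voronoi Q \<Lambda> \<subseteq> D" unfolding D_def
  proof (intro subsetI CollectI ballI)
    fix x y assume "x \<in> voronoi Q \<Lambda>" "y \<in> \<Lambda>"
    thus "norm x \<le> norm (x - y)"
      using quantizer_nearest[of y x] unfolding voronoi_def by (simp add: dist_norm)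
  qed
  txt \<open>Points of D outside the Voronoi region are equidistant from 0 and another lattice
    point, so they lie on countably many hyperplanes.\<close>
  have "D - voronoi Q \<Lambda> \<subseteq> (\<Union>y\<in>\<Lambda> - {0}. {x. (2 *\<^sub>R y) \<bullet> x = y \<bullet> y})"
  proof
    fix x assume x: "x \<in> D - voronoi Q \<Lambda>"
    let ?y = "Q \<Lambda> x"
    have y: "?y \<in> \<Lambda>" "?y \<noteq> 0" using x quantizer_in unfolding voronoi_def by auto
    have "dist x ?y \<le> dist x 0" by (rule quantizer_nearest[OF assms(2)])
    moreover have "norm x \<le> norm (x - ?y)" using x y unfolding D_def by blast
    ultimately have "norm x ^ 2 = norm (x - ?y) ^ 2" by (simp add: dist_norm)
    hence "(2 *\<^sub>R ?y) \<bullet> x = ?y \<bullet> ?y"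
      by (simp add: power2_norm_eq_inner inner_commute algebra_simps)
    thus "x \<in> (\<Union>y\<in>\<Lambda> - {0}. {x. (2 *\<^sub>R y) \<bullet> x = y \<bullet> y})" using y by blast
  qed
  moreover have "negligible (\<Union>y\<in>\<Lambda> - {0}. {x. (2 *\<^sub>R y) \<bullet> x = y \<bullet> y})"
  proof (rule negligible_countable_Union)
    fix S assume "S \<in> (\<lambda>y. {x. (2 *\<^sub>R y) \<bullet> x = y \<bullet> y}) ` (\<Lambda> - {0})"
    then obtain y where "y \<noteq> 0" and S: "S = {x. (2 *\<^sub>R y) \<bullet> x = y \<bullet> y}" by blast
    show "negligible S" unfolding S by (rule negligible_hyperplane) (use \<open>y \<noteq> 0\<close> in simp)
  qed (use assms(1) in simp)
  ultimately have "D - voronoi Q \<Lambda> \<in> sets lebesgue"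
    using negligible_subset negligible_imp_sets by blast
  hence "D - (D - voronoi Q \<Lambda>) \<in> sets lebesgue" using D_sets by blast
  moreover have "D - (D - voronoi Q \<Lambda>) = voronoi Q \<Lambda>" using sub by blast
  ultimately show ?thesis by simp
qed

lemma emeasure_voronoi_nonzero:
  assumes "countable \<Lambda>" and "voronoi Q \<Lambda> \<in> sets lebesgue"
  shows "emeasure lebesgue (voronoi Q \<Lambda>) \<noteq> 0"
proof
  assume "emeasure lebesgue (voronoi Q \<Lambda>) = 0"
  hence "negligible (voronoi Q \<Lambda>)" using negligible_iff_emeasure0[OF assms(2)] by simp
  hence "negligible (\<Union>y\<in>\<Lambda>. (+) y ` voronoi Q \<Lambda>)"
    using assms(1) by (intro negligible_countable_Union) (auto intro: negligible_translation)
  moreover have "x \<in> (+) (Q \<Lambda> x) ` voronoi Q \<Lambda>" for x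
    using modl_in_voronoi[of x] unfolding modl_def by (metis add.commute diff_add_cancel image_eqI)
  hence "(\<Union>y\<in>\<Lambda>. (+) y ` voronoi Q \<Lambda>) = UNIV" using quantizer_in by blast
  ultimately show False by simp
qed

end

lemma prob_space_uniform_measure_scaled:
  fixes V :: "'a::euclidean_space set"
  assumes V: "emeasure lebesgue V \<noteq> 0" "emeasure lebesgue V \<noteq> \<infinity>" and b: "b > 0"
  shows "prob_space (uniform_measure lebesgue ((\<lambda>x. (1 / b) *\<^sub>R x) ` V))"
proof (rule prob_space_uniform_measure)
  have "emeasure lebesgue ((\<lambda>x. (1 / b) *\<^sub>R x + 0) ` V) = \<bar>1 / b\<bar> ^ DIM('a) * emeasure lebesgue V"
    by (rule emeasure_lebesgue_affine)
  hence em: "emeasure lebesgue ((\<lambda>x. (1 / b) *\<^sub>R x) ` V) = ennreal ((1 / b) ^ DIM('a)) * emeasure lebesgue V"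
    using b by simp
  show "emeasure lebesgue ((\<lambda>x. (1 / b) *\<^sub>R x) ` V) \<noteq> 0"
    unfolding em using V(1) b by simp
  show "emeasure lebesgue ((\<lambda>x. (1 / b) *\<^sub>R x) ` V) \<noteq> \<infinity>"
    unfolding em using V(2) by (simp add: ennreal_mult_eq_top_iff)
qed


section \<open>Construction A lattices\<close>

locale constrA_lattices =
  fixes \<gamma> :: nat and G :: "'n::finite \<Rightarrow> nat \<Rightarrow> int" and B :: "real^'n^'n" and K :: nat
  assumes prime: "prime \<gamma>" and invertible_B: "invertible B"
    and full_rank: "indep_mod \<gamma> G UNIV {1..K}"
begin

abbreviation lat :: "nat \<Rightarrow> (real^'n) set" where
  "lat a \<equiv> constrA \<gamma> B G a"

definition embed :: "('n \<Rightarrow> int) \<Rightarrow> real^'n" where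
  "embed u = B *v ((1 / real \<gamma>) *\<^sub>R (\<chi> r. real_of_int (u r)))"

definition codeword :: "nat \<Rightarrow> (nat \<Rightarrow> int) \<Rightarrow> 'n \<Rightarrow> int" where
  "codeword a w = (\<lambda>r. \<Sum>j\<in>{1..a}. G r j * w j)"

text \<open>The integer lattice \<open>\<gamma>\<int>\<^sup>n + G\<^sub>a\<int>\<^sup>a\<close>; \<open>lat a\<close> is its image under \<open>embed\<close>.\<close>
definition int_lattice :: "nat \<Rightarrow> ('n \<Rightarrow> int) set" where
  "int_lattice a = {u. \<exists>w. \<forall>r. int \<gamma> dvd (u r - codeword a w r)}"

lemma gamma_pos: "\<gamma> > 0"
  using prime prime_gt_0_nat by blast

lemma embed_add: "embed (\<lambda>r. u r + v r) = embed u + embed v"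
proof -
  have "(\<chi> r. real_of_int (u r + v r)) = (\<chi> r. real_of_int (u r)) + (\<chi> r. real_of_int (v r))"
    by (simp add: vec_eq_iff)
  thus ?thesis unfolding embed_def by (simp only: scaleR_add_right matrix_vector_right_distrib)
qed

lemma embed_diff: "embed (\<lambda>r. u r - v r) = embed u - embed v"
proof -
  have "(\<chi> r. real_of_int (u r - v r)) = (\<chi> r. real_of_int (u r)) - (\<chi> r. real_of_int (v r))"
    by (simp add: vec_eq_iff)
  thus ?thesis unfolding embed_def by (simp only: scaleR_diff_right matrix_vector_mult_diff_distrib)
qed

lemma embed_scale: "embed (\<lambda>r. c * u r) = of_int c *\<^sub>R embed u"
proof -
  have "(\<chi> r. real_of_int (c * u r)) = of_int c *\<^sub>R (\<chi> r. real_of_int (u r))"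
    by (simp add: vec_eq_iff)
  thus ?thesis unfolding embed_def by (simp only: matrix_vector_mult_scaleR scaleR_scaleR mult.commute)
qed

lemma embed_zero: "embed (\<lambda>r. 0) = 0"
  unfolding embed_def by (simp add: vec_eq_iff matrix_vector_mult_def)

lemma embed_sum: "finite A \<Longrightarrow> embed (\<lambda>r. \<Sum>l\<in>A. f l r) = (\<Sum>l\<in>A. embed (f l))"
  by (induction A rule: finite_induct) (simp_all add: embed_zero embed_add)

lemma embed_gamma_multiple: "embed (\<lambda>r. int \<gamma> * z r) = B *v (\<chi> r. real_of_int (z r))"
proof -
  have "(1 / real \<gamma>) *\<^sub>R (\<chi> r. real_of_int (int \<gamma> * z r)) = (\<chi> r. real_of_int (z r))"
    using gamma_pos by (simp add: vec_eq_iff)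
  thus ?thesis unfolding embed_def by simp
qed

lemma inj_embed: "inj embed"
proof (rule injI)
  fix u v assume eq: "embed u = embed v"
  obtain Bi where Bi: "Bi ** B = mat 1" using invertible_B invertible_left_inverse by blast
  have "Bi *v embed u = Bi *v embed v" using eq by simp
  hence "(1 / real \<gamma>) *\<^sub>R (\<chi> r. real_of_int (u r)) = (1 / real \<gamma>) *\<^sub>R (\<chi> r. real_of_int (v r))"
    unfolding embed_def by (simp add: matrix_vector_mul_assoc Bi)
  hence "(\<chi> r. real_of_int (u r)) = (\<chi> r. real_of_int (v r))" using gamma_pos by simp
  thus "u = v" by (simp add: vec_eq_iff fun_eq_iff)
qed

lemma codeword_add: "codeword a (\<lambda>j. w j + w' j) r = codeword a w r + codeword a w' r"
  unfolding codeword_def by (simp add: sum.distrib algebra_simps)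

lemma codeword_diff: "codeword a (\<lambda>j. w j - w' j) r = codeword a w r - codeword a w' r"
  unfolding codeword_def by (simp add: sum_subtractf algebra_simps)

lemma codeword_scale: "codeword a (\<lambda>j. c * w j) r = c * codeword a w r"
  unfolding codeword_def by (simp add: sum_distrib_left algebra_simps)

lemma codeword_sum: "codeword a (\<lambda>j. \<Sum>l\<in>A. f l j) r = (\<Sum>l\<in>A. codeword a (f l) r)"
  unfolding codeword_def by (simp add: sum_distrib_left) (rule sum.swap)

lemma codeword_zero: "codeword a (\<lambda>_. 0) = (\<lambda>r. 0)"
  by (simp add: codeword_def)

lemma codeword_dvd: "(\<And>j. j \<in> {1..a} \<Longrightarrow> int \<gamma> dvd w j) \<Longrightarrow> int \<gamma> dvd codeword a w r"
  unfolding codeword_def by (auto intro!: dvd_sum)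

lemma codeword_split:
  "a \<le> b \<Longrightarrow> codeword b w r = codeword a w r + (\<Sum>j\<in>{a<..b}. G r j * w j)"
proof -
  assume "a \<le> b"
  hence "{1..b} = {1..a} \<union> {a<..b}" by auto
  thus ?thesis unfolding codeword_def by (simp only:) (rule sum.union_disjoint; auto)
qed

lemma codeword_eq_if_zero_above:
  "a \<le> b \<Longrightarrow> (\<And>j. j > a \<Longrightarrow> w j = 0) \<Longrightarrow> codeword b w = codeword a w"
  by (rule ext, subst codeword_split[of a b], auto)

lemma codeword_cong: "(\<And>j. j \<in> {1..a} \<Longrightarrow> w j = w' j) \<Longrightarrow> codeword a w = codeword a w'"
  unfolding codeword_def by (auto intro!: sum.cong ext)

lemma codeword_truncate: "a \<le> b \<Longrightarrow> codeword a w = codeword b (\<lambda>j. if j \<le> a then w j else 0)"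
  by (subst codeword_eq_if_zero_above[of a b]) (auto intro: codeword_cong)

lemma coeff_dvd_if_codeword_dvd:
  assumes "\<And>r. int \<gamma> dvd codeword K c r" and "j \<in> {1..K}"
  shows "int \<gamma> dvd c j"
proof -
  have "\<forall>r\<in>UNIV. (\<Sum>j\<in>{1..K}. c j * G r j) mod int \<gamma> = 0"
    using assms(1) unfolding codeword_def by (simp add: mult.commute dvd_eq_mod_eq_0)
  hence "\<forall>j\<in>{1..K}. c j mod int \<gamma> = 0" using full_rank unfolding indep_mod_def by blast
  thus ?thesis using assms(2) by (simp add: dvd_eq_mod_eq_0)
qed

lemma int_lattice_dvd_diff:
  assumes "u \<in> int_lattice a" "\<And>r. int \<gamma> dvd (v r - u r)"
  shows "v \<in> int_lattice a"
proof -
  obtain w where w: "\<forall>r. int \<gamma> dvd (u r - codeword a w r)"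
    using assms(1) unfolding int_lattice_def by blast
  have "int \<gamma> dvd (v r - codeword a w r)" for r
    using dvd_add[OF assms(2)[of r] spec[OF w, of r]] by simp
  thus ?thesis unfolding int_lattice_def by blast
qed

lemma codeword_in_int_lattice: "codeword a w \<in> int_lattice a"
  unfolding int_lattice_def by (rule CollectI, rule exI[of _ w]) simp

lemma int_lattice_dvd: "(\<And>r. int \<gamma> dvd u r) \<Longrightarrow> u \<in> int_lattice a"
  by (rule int_lattice_dvd_diff[OF codeword_in_int_lattice[of a "\<lambda>_. 0"]])
     (simp add: codeword_zero)

lemma int_lattice_add:
  assumes "u \<in> int_lattice a" "v \<in> int_lattice a"
  shows "(\<lambda>r. u r + v r) \<in> int_lattice a"
proof -
  obtain w w' where w: "\<forall>r. int \<gamma> dvd (u r - codeword a w r)"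
    and w': "\<forall>r. int \<gamma> dvd (v r - codeword a w' r)"
    using assms unfolding int_lattice_def by blast
  have "int \<gamma> dvd ((u r + v r) - codeword a (\<lambda>j. w j + w' j) r)" for r
    using dvd_add[OF spec[OF w, of r] spec[OF w', of r]] by (simp add: codeword_add algebra_simps)
  thus ?thesis unfolding int_lattice_def by blast
qed

lemma int_lattice_scale: "u \<in> int_lattice a \<Longrightarrow> (\<lambda>r. c * u r) \<in> int_lattice a"
proof -
  assume "u \<in> int_lattice a"
  then obtain w where w: "\<forall>r. int \<gamma> dvd (u r - codeword a w r)" unfolding int_lattice_def by blast
  have "int \<gamma> dvd ((c * u r) - codeword a (\<lambda>j. c * w j) r)" for r
    using dvd_mult[OF spec[OF w, of r], of c] by (simp add: codeword_scale right_diff_distrib)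
  thus ?thesis unfolding int_lattice_def by blast
qed

lemma int_lattice_diff:
  "u \<in> int_lattice a \<Longrightarrow> v \<in> int_lattice a \<Longrightarrow> (\<lambda>r. u r - v r) \<in> int_lattice a"
  using int_lattice_add[of u a "\<lambda>r. (-1) * v r"] int_lattice_scale[of v a "-1"] by simp

lemma int_lattice_mono:
  assumes "a \<le> b"
  shows "int_lattice a \<subseteq> int_lattice b"
proof
  fix u assume "u \<in> int_lattice a"
  then obtain w where "\<forall>r. int \<gamma> dvd (u r - codeword a w r)" unfolding int_lattice_def by blast
  thus "u \<in> int_lattice b"
    unfolding int_lattice_def codeword_truncate[OF assms, of w] by blast
qed

lemma constrA_eq_embed_image: "lat a = embed ` int_lattice a"
proof (rule set_eqI, rule iffI)
  have shift: "(1/real \<gamma>) *\<^sub>R (\<chi> r. real_of_int (m r)) + (\<chi> r. real_of_int (z r))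
      = (1/real \<gamma>) *\<^sub>R (\<chi> r. real_of_int (m r + int \<gamma> * z r))" for m z
    using gamma_pos by (simp add: vec_eq_iff field_simps)
  {
    fix x assume "x \<in> lat a"
    then obtain w z where x: "x = B *v ((1 / real \<gamma>) *\<^sub>R
        (\<chi> r. real_of_int ((\<Sum>j\<in>{1..a}. G r j * w j) mod int \<gamma>)) + (\<chi> r. real_of_int (z r)))"
      unfolding constrA_def by blast
    let ?u = "\<lambda>r. (codeword a w r) mod int \<gamma> + int \<gamma> * z r"
    have "x = embed ?u" unfolding x embed_def codeword_def by (simp only: shift)
    moreover have "?u \<in> int_lattice a"
      by (rule int_lattice_dvd_diff[OF codeword_in_int_lattice[of a w]])
         (simp add: mod_eq_dvd_iff[symmetric] mod_diff_left_eq[symmetric])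
    ultimately show "x \<in> embed ` int_lattice a" by blast
  next
    fix x assume "x \<in> embed ` int_lattice a"
    then obtain u w where x: "x = embed u" and w: "\<forall>r. int \<gamma> dvd (u r - codeword a w r)"
      unfolding int_lattice_def by blast
    define z where "z = (\<lambda>r. (u r - codeword a w r mod int \<gamma>) div int \<gamma>)"
    have "int \<gamma> dvd (u r - codeword a w r mod int \<gamma>)" for r
      using w by (metis mod_diff_right_eq mod_eq_0_iff_dvd)
    hence "u = (\<lambda>r. codeword a w r mod int \<gamma> + int \<gamma> * z r)" unfolding z_def by auto
    hence "x = B *v ((1 / real \<gamma>) *\<^sub>R
        (\<chi> r. real_of_int ((\<Sum>j\<in>{1..a}. G r j * w j) mod int \<gamma>)) + (\<chi> r. real_of_int (z r)))"
      unfolding x embed_def codeword_def by (simp only: shift)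
    thus "x \<in> lat a" unfolding constrA_def by blast
  }
qed

lemma mem_constrA: "x \<in> lat a \<longleftrightarrow> (\<exists>u\<in>int_lattice a. x = embed u)"
  unfolding constrA_eq_embed_image by blast

text \<open>Full column rank of G identifies the codeword coefficients modulo \<open>\<gamma>\<close>.\<close>
lemma embed_codeword_in_constrA_iff:
  assumes "a \<le> K"
  shows "embed (codeword K c) \<in> lat a \<longleftrightarrow> (\<forall>j\<in>{a<..K}. int \<gamma> dvd c j)"
proof
  assume "embed (codeword K c) \<in> lat a"
  then obtain u where "u \<in> int_lattice a" "embed (codeword K c) = embed u"
    unfolding mem_constrA by blast
  hence "codeword K c \<in> int_lattice a" using inj_embed by (simp add: inj_eq)
  then obtain w where w: "\<forall>r. int \<gamma> dvd (codeword K c r - codeword a w r)"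
    unfolding int_lattice_def by blast
  define w' where "w' = (\<lambda>j. if j \<le> a then w j else (0::int))"
  have "codeword a w = codeword K w'" unfolding w'_def using codeword_truncate[OF assms] .
  hence "int \<gamma> dvd codeword K (\<lambda>j. c j - w' j) r" for r using w by (simp add: codeword_diff)
  hence dvd: "int \<gamma> dvd (c j - w' j)" if "j \<in> {1..K}" for j
    using coeff_dvd_if_codeword_dvd[OF _ that] by blast
  show "\<forall>j\<in>{a<..K}. int \<gamma> dvd c j"
  proof
    fix j assume "j \<in> {a<..K}"
    thus "int \<gamma> dvd c j" using dvd[of j] unfolding w'_def by simp
  qed
next
  assume "\<forall>j\<in>{a<..K}. int \<gamma> dvd c j"
  hence "int \<gamma> dvd (codeword K c r - codeword a c r)" for r
    using codeword_split[OF assms, of c r] by (auto intro!: dvd_sum)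
  hence "codeword K c \<in> int_lattice a" unfolding int_lattice_def by blast
  thus "embed (codeword K c) \<in> lat a" unfolding mem_constrA by blast
qed

lemma constrA_add: "x \<in> lat a \<Longrightarrow> y \<in> lat a \<Longrightarrow> x + y \<in> lat a"
  unfolding mem_constrA by (metis int_lattice_add embed_add)

lemma constrA_diff: "x \<in> lat a \<Longrightarrow> y \<in> lat a \<Longrightarrow> x - y \<in> lat a"
  unfolding mem_constrA by (metis int_lattice_diff embed_diff)

lemma constrA_scale: "x \<in> lat a \<Longrightarrow> of_int c *\<^sub>R x \<in> lat a"
  unfolding mem_constrA by (metis int_lattice_scale embed_scale)

lemma constrA_zero: "0 \<in> lat a"
  unfolding mem_constrA by (metis int_lattice_dvd dvd_0_right embed_zero)

lemma constrA_sum: "finite A \<Longrightarrow> (\<And>l. l \<in> A \<Longrightarrow> f l \<in> lat a) \<Longrightarrow> (\<Sum>l\<in>A. f l) \<in> lat a"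
  by (induction A rule: finite_induct) (auto intro: constrA_add constrA_zero)

lemma constrA_mono: "a \<le> b \<Longrightarrow> lat a \<subseteq> lat b"
  unfolding constrA_eq_embed_image using int_lattice_mono by blast

lemma constrA_subset_iff:
  assumes "a \<le> K" "b \<le> K"
  shows "lat a \<subseteq> lat b \<longleftrightarrow> a \<le> b"
proof
  assume sub: "lat a \<subseteq> lat b"
  show "a \<le> b"
  proof (rule ccontr)
    assume "\<not> a \<le> b"
    define c where "c = (\<lambda>j. if j = a then (1::int) else 0)"
    have "embed (codeword K c) \<in> lat a"
      using assms by (subst embed_codeword_in_constrA_iff) (auto simp: c_def)
    hence "embed (codeword K c) \<in> lat b" using sub by blast
    hence "\<forall>j\<in>{b<..K}. int \<gamma> dvd c j" using assms(2) embed_codeword_in_constrA_iff by blast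
    hence "int \<gamma> dvd c a" using assms(1) \<open>\<not> a \<le> b\<close> by simp
    thus False using prime by (simp add: c_def)
  qed
qed (rule constrA_mono)

lemma countable_constrA: "countable (lat a)"
  unfolding constrA_eq_embed_image by simp

lemma bounded_voronoi_constrA:
  assumes nearest: "nearest_quantizer (lat a) (Q (lat a))"
  shows "bounded (voronoi Q (lat a))"
proof -
  obtain Bi where Bi: "B ** Bi = mat 1" using invertible_B invertible_right_inverse by blast
  obtain C where C: "\<And>w. norm (B *v w) \<le> norm w * C"
    using bounded_linear.bounded[OF matrix_vector_mul_bounded_linear[of B]] by blast
  txt \<open>Compare with the point of \<open>B\<int>\<^sup>n \<subseteq> lat a\<close> obtained by rounding down coordinates.\<close>
  have "norm x \<le> real CARD('n) * \<bar>C\<bar>" if x: "x \<in> voronoi Q (lat a)" for x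
  proof -
    define u where "u = Bi *v x"
    define z where "z = (\<chi> r. real_of_int (floor (u $ r)))"
    have frac: "0 \<le> (u - z) $ i \<and> (u - z) $ i < 1" for i
      unfolding z_def using floor_correct[of "u $ i"] by simp linarith
    have "norm (u - z) \<le> (\<Sum>i\<in>UNIV. \<bar>(u - z) $ i\<bar>)" by (rule norm_le_l1_cart)
    also have "\<dots> \<le> (\<Sum>i\<in>(UNIV::'n set). 1)"
      by (rule sum_mono) (use frac in \<open>simp add: abs_of_nonneg less_imp_le\<close>)
    finally have norm_frac: "norm (u - z) \<le> real CARD('n)" by simp
    have "B *v z \<in> lat a"
      unfolding mem_constrA z_def by (metis embed_gamma_multiple int_lattice_dvd dvd_triv_left)
    hence "dist x (Q (lat a) x) \<le> dist x (B *v z)"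
      by (rule quantizer_nearest[of "lat a" Q, OF nearest])
    hence "norm x \<le> norm (x - B *v z)" using x unfolding voronoi_def by (simp add: dist_norm)
    also have "x - B *v z = B *v (u - z)"
      unfolding u_def by (simp add: matrix_vector_mul_assoc Bi matrix_vector_mult_diff_distrib)
    also have "norm (B *v (u - z)) \<le> norm (u - z) * C" by (rule C)
    also have "\<dots> \<le> norm (u - z) * \<bar>C\<bar>" by (rule mult_left_mono) simp_all
    also have "\<dots> \<le> real CARD('n) * \<bar>C\<bar>" by (rule mult_right_mono[OF norm_frac]) simp
    finally show ?thesis .
  qed
  thus ?thesis unfolding bounded_iff by blast
qed

end

section \<open>Coset representatives\<close>

definition digits :: "nat \<Rightarrow> nat \<Rightarrow> nat \<Rightarrow> (nat \<Rightarrow> int) set" where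
  "digits p a b = {d. \<forall>j. (j \<in> {a<..b} \<longrightarrow> 0 \<le> d j \<and> d j < int p) \<and> (j \<notin> {a<..b} \<longrightarrow> d j = 0)}"

lemma zero_in_digits: "p > 0 \<Longrightarrow> (\<lambda>_. 0) \<in> digits p a b"
  unfolding digits_def by auto

lemma digits_bij_betw_PiE:
  "bij_betw (\<lambda>d. restrict d {a<..b}) (digits p a b) (PiE {a<..b} (\<lambda>_. {0..<int p}))"
proof (rule bij_betw_imageI)
  show "inj_on (\<lambda>d. restrict d {a<..b}) (digits p a b)"
  proof (rule inj_onI, rule ext)
    fix d d' j assume d: "d \<in> digits p a b" "d' \<in> digits p a b"
      and eq: "restrict d {a<..b} = restrict d' {a<..b}"
    show "d j = d' j"
    proof (cases "j \<in> {a<..b}")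
      case True
      thus ?thesis using fun_cong[OF eq, of j] by simp
    qed (use d in \<open>simp add: digits_def\<close>)
  qed
  show "(\<lambda>d. restrict d {a<..b}) ` digits p a b = PiE {a<..b} (\<lambda>_. {0..<int p})"
  proof (rule set_eqI, rule iffI)
    fix e assume e: "e \<in> PiE {a<..b} (\<lambda>_. {0..<int p})"
    define d where "d = (\<lambda>j. if j \<in> {a<..b} then e j else 0)"
    have "d \<in> digits p a b" using e unfolding d_def digits_def by auto
    moreover have "restrict d {a<..b} = e"
      using e unfolding d_def by (auto simp: fun_eq_iff PiE_def extensional_def)
    ultimately show "e \<in> (\<lambda>d. restrict d {a<..b}) ` digits p a b" by blast
  next
    fix e assume "e \<in> (\<lambda>d. restrict d {a<..b}) ` digits p a b"
    thus "e \<in> PiE {a<..b} (\<lambda>_. {0..<int p})" unfolding digits_def by auto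
  qed
qed

lemma card_digits: "card (digits p a b) = p ^ (b - a)"
  using bij_betw_same_card[OF digits_bij_betw_PiE] by (simp add: card_PiE)

lemma finite_digits: "finite (digits p a b)"
  using bij_betw_finite[OF digits_bij_betw_PiE] by (simp add: finite_PiE)

context constrA_lattices
begin

definition coset_rep :: "((real^'n) set \<Rightarrow> real^'n \<Rightarrow> real^'n) \<Rightarrow> nat \<Rightarrow> (nat \<Rightarrow> int) \<Rightarrow> real^'n" where
  "coset_rep Q a d = modl Q (lat a) (embed (codeword K d))"

context
  fixes a b :: nat and Q :: "(real^'n) set \<Rightarrow> real^'n \<Rightarrow> real^'n"
  assumes nearest: "nearest_quantizer (lat a) (Q (lat a))" and ab: "a \<le> b" and bK: "b \<le> K"
begin

lemma coset_rep_in: "d \<in> digits \<gamma> a b \<Longrightarrow> coset_rep Q a d \<in> lat b \<inter> voronoi Q (lat a)"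
proof -
  assume d: "d \<in> digits \<gamma> a b"
  have "embed (codeword K d) \<in> lat b"
    using d bK by (subst embed_codeword_in_constrA_iff) (auto simp: digits_def)
  hence "embed (codeword K d) - Q (lat a) (embed (codeword K d)) \<in> lat b"
    using quantizer_in[of "lat a" Q, OF nearest] constrA_mono[OF ab] constrA_diff by blast
  thus ?thesis unfolding coset_rep_def using modl_in_voronoi[of "lat a" Q, OF nearest] by (simp add: modl_def)
qed

lemma inj_on_coset_rep: "inj_on (coset_rep Q a) (digits \<gamma> a b)"
proof (rule inj_onI)
  fix d d' assume d: "d \<in> digits \<gamma> a b" and d': "d' \<in> digits \<gamma> a b"
    and eq: "coset_rep Q a d = coset_rep Q a d'"
  have "embed (codeword K d) - embed (codeword K d')
      = Q (lat a) (embed (codeword K d)) - Q (lat a) (embed (codeword K d'))"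
    using eq unfolding coset_rep_def modl_def by (simp add: algebra_simps)
  also have "\<dots> \<in> lat a" using quantizer_in[of "lat a" Q, OF nearest] constrA_diff by blast
  moreover have "codeword K (\<lambda>j. d j - d' j) = (\<lambda>r. codeword K d r - codeword K d' r)"
    by (rule ext, rule codeword_diff)
  ultimately have "embed (codeword K (\<lambda>j. d j - d' j)) \<in> lat a"
    by (simp add: embed_diff)
  hence dvd: "\<forall>j\<in>{a<..K}. int \<gamma> dvd (d j - d' j)"
    using ab bK by (subst (asm) embed_codeword_in_constrA_iff) auto
  show "d = d'"
  proof
    fix j show "d j = d' j"
    proof (cases "j \<in> {a<..b}")
      case True
      thus ?thesis using d d' dvd bK
        by (intro eq_if_dvd_diff_bounded[of _ "int \<gamma>"]) (auto simp: digits_def)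
    qed (use d d' in \<open>auto simp: digits_def\<close>)
  qed
qed

lemma constrA_inter_voronoi_eq_image: "lat b \<inter> voronoi Q (lat a) = coset_rep Q a ` digits \<gamma> a b"
proof
  show "lat b \<inter> voronoi Q (lat a) \<subseteq> coset_rep Q a ` digits \<gamma> a b"
  proof
    fix x assume x: "x \<in> lat b \<inter> voronoi Q (lat a)"
    from IntD1[OF x] obtain u w where u: "x = embed u" and w: "\<forall>r. int \<gamma> dvd (u r - codeword b w r)"
      unfolding mem_constrA int_lattice_def by blast
    define d where "d = (\<lambda>j. if j \<in> {a<..b} then w j mod int \<gamma> else 0)"
    have d: "d \<in> digits \<gamma> a b" unfolding d_def digits_def using gamma_pos by auto
    have "codeword K d = codeword b d" using ab bK by (intro codeword_eq_if_zero_above) (auto simp: d_def)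
    moreover have "codeword a d r = 0" for r unfolding codeword_def d_def by (auto intro!: sum.neutral)
    ultimately have cd: "codeword K d r = (\<Sum>j\<in>{a<..b}. G r j * d j)" for r
      using codeword_split[OF ab, of d r] by simp
    have "int \<gamma> dvd ((u r - codeword K d r) - codeword a w r)" for r
    proof -
      have eq: "(u r - codeword K d r) - codeword a w r
          = (u r - codeword b w r) + (\<Sum>j\<in>{a<..b}. G r j * (w j - d j))"
        using codeword_split[OF ab, of w r] by (simp add: cd sum_subtractf algebra_simps)
      have "int \<gamma> dvd (\<Sum>j\<in>{a<..b}. G r j * (w j - d j))"
        by (auto intro!: dvd_sum dvd_mult simp: d_def mod_eq_dvd_iff[symmetric])
      thus ?thesis unfolding eq using w by (simp add: dvd_add)
    qed
    hence "(\<lambda>r. u r - codeword K d r) \<in> int_lattice a"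
      by (intro int_lattice_dvd_diff[OF codeword_in_int_lattice]) auto
    hence "x - embed (codeword K d) \<in> lat a" unfolding mem_constrA u by (metis embed_diff)
    hence "coset_rep Q a d = modl Q (lat a) x"
      unfolding coset_rep_def using modl_diff_lattice[of "lat a" Q, OF nearest, of "x - embed (codeword K d)" x]
      by simp
    also have "\<dots> = x" using x modl_voronoi[of "lat a" Q, OF nearest] by blast
    finally show "x \<in> coset_rep Q a ` digits \<gamma> a b" using d by (metis image_eqI)
  qed
qed (use coset_rep_in in blast)

lemma card_constrA_inter_voronoi: "card (lat b \<inter> voronoi Q (lat a)) = \<gamma> ^ (b - a)"
  using constrA_inter_voronoi_eq_image card_image[OF inj_on_coset_rep] card_digits by simp

end
end

section \<open>Ranks over the prime field\<close>

definition span_mod :: "nat \<Rightarrow> ('r \<Rightarrow> 'c \<Rightarrow> int) \<Rightarrow> 'r set \<Rightarrow> 'c set \<Rightarrow> ('r \<Rightarrow> int) set" where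
  "span_mod p M R J = {restrict (\<lambda>m. (\<Sum>l\<in>J. c l * M m l) mod int p) R | c. True}"

lemma exists_inverse_mod_prime:
  assumes "prime p" "\<not> int p dvd x"
  shows "\<exists>u. int p dvd (u * x - 1)"
proof -
  have "coprime (int p) x" using assms by (simp add: prime_imp_coprime)
  hence g: "gcd x (int p) = 1" by (simp add: coprime_commute coprime_iff_gcd_eq_1)
  obtain u v where "u * x + v * int p = gcd x (int p)" using bezout_int by blast
  hence "u * x - 1 = (- v) * int p" using g by simp
  thus ?thesis by (metis dvd_triv_right)
qed

context
  fixes p :: nat and M :: "'r \<Rightarrow> 'c \<Rightarrow> int" and R :: "'r set"
  assumes prime: "prime p"
begin

lemma span_mod_eq_image_PiE:
  "span_mod p M R J
     = (\<lambda>c. restrict (\<lambda>m. (\<Sum>l\<in>J. c l * M m l) mod int p) R) ` PiE J (\<lambda>_. {0..<int p})"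
proof (rule set_eqI, rule iffI)
  fix x assume "x \<in> span_mod p M R J"
  then obtain c where x: "x = restrict (\<lambda>m. (\<Sum>l\<in>J. c l * M m l) mod int p) R"
    unfolding span_mod_def by blast
  define c' where "c' = restrict (\<lambda>l. c l mod int p) J"
  have "c' \<in> PiE J (\<lambda>_. {0..<int p})" unfolding c'_def using prime prime_gt_0_nat by auto
  moreover have "x = restrict (\<lambda>m. (\<Sum>l\<in>J. c' l * M m l) mod int p) R"
    unfolding x c'_def using sum_mod_coeffs[of c "int p" _ J]
    by (auto intro!: ext simp: restrict_def cong: sum.cong)
  ultimately show "x \<in> (\<lambda>c. restrict (\<lambda>m. (\<Sum>l\<in>J. c l * M m l) mod int p) R) ` PiE J (\<lambda>_. {0..<int p})"
    by blast
qed (auto simp: span_mod_def)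

lemma card_span_mod_indep:
  assumes J: "finite J" "indep_mod p M R J"
  shows "card (span_mod p M R J) = p ^ card J"
proof -
  have "inj_on (\<lambda>c. restrict (\<lambda>m. (\<Sum>l\<in>J. c l * M m l) mod int p) R) (PiE J (\<lambda>_. {0..<int p}))"
  proof (rule inj_onI)
    fix c c' assume c: "c \<in> PiE J (\<lambda>_. {0..<int p})" and c': "c' \<in> PiE J (\<lambda>_. {0..<int p})"
      and eq: "restrict (\<lambda>m. (\<Sum>l\<in>J. c l * M m l) mod int p) R
             = restrict (\<lambda>m. (\<Sum>l\<in>J. c' l * M m l) mod int p) R"
    have "(\<Sum>l\<in>J. (c l - c' l) * M m l) mod int p = 0" if "m \<in> R" for m
    proof -
      have "(\<Sum>l\<in>J. (c l - c' l) * M m l) = (\<Sum>l\<in>J. c l * M m l) - (\<Sum>l\<in>J. c' l * M m l)"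
        by (simp add: sum_subtractf left_diff_distrib)
      also have "int p dvd \<dots>"
        using fun_cong[OF eq, of m] that by (simp add: mod_eq_dvd_iff)
      finally show ?thesis by (rule dvd_imp_mod_0)
    qed
    moreover have "(\<forall>m\<in>R. (\<Sum>l\<in>J. (c l - c' l) * M m l) mod int p = 0)
        \<longrightarrow> (\<forall>l\<in>J. (c l - c' l) mod int p = 0)"
      using J(2) unfolding indep_mod_def by (rule spec)
    ultimately have "\<forall>l\<in>J. (c l - c' l) mod int p = 0" by blast
    hence "c l = c' l" if "l \<in> J" for l
      using c c' that by (intro eq_if_dvd_diff_bounded[of _ "int p"]) (auto simp: dvd_eq_mod_eq_0)
    thus "c = c'" using c c' by (metis PiE_ext)
  qed
  hence "card (span_mod p M R J) = card (PiE J (\<lambda>_. {0..<int p}))"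
    unfolding span_mod_eq_image_PiE by (rule card_image)
  also have "\<dots> = p ^ card J" using J(1) by (simp add: card_PiE)
  finally show ?thesis .
qed

lemma rank_mod_attained:
  assumes "finite J"
  shows "\<exists>J0\<subseteq>J. indep_mod p M R J0 \<and> card J0 = rank_mod p M R J"
    and "\<And>J'. J' \<subseteq> J \<Longrightarrow> indep_mod p M R J' \<Longrightarrow> card J' \<le> rank_mod p M R J"
proof -
  let ?S = "{card J' | J'. J' \<subseteq> J \<and> finite J' \<and> indep_mod p M R J'}"
  have "?S \<subseteq> {..card J}" using assms card_mono by fastforce
  hence fin: "finite ?S" using finite_subset by blast
  have "indep_mod p M R {}" unfolding indep_mod_def by simp
  hence "?S \<noteq> {}" by blast
  hence "rank_mod p M R J \<in> ?S" unfolding rank_mod_def using Max_in[OF fin] by blast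
  thus "\<exists>J0\<subseteq>J. indep_mod p M R J0 \<and> card J0 = rank_mod p M R J" by auto
  fix J' assume "J' \<subseteq> J" "indep_mod p M R J'"
  hence "card J' \<in> ?S" using assms finite_subset by blast
  thus "card J' \<le> rank_mod p M R J" unfolding rank_mod_def using Max_ge[OF fin] by blast
qed

lemma indep_mod_if_rank_eq_card:
  assumes "finite J" "rank_mod p M R J = card J"
  shows "indep_mod p M R J"
proof -
  obtain J0 where "J0 \<subseteq> J" "indep_mod p M R J0" "card J0 = rank_mod p M R J"
    using rank_mod_attained(1)[OF assms(1)] by blast
  thus ?thesis using card_subset_eq[OF assms(1)] assms(2) by metis
qed

lemma column_in_span_mod_of_maximal:
  assumes J: "finite J" and J0: "J0 \<subseteq> J" "indep_mod p M R J0" "card J0 = rank_mod p M R J"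
    and j: "j \<in> J"
  shows "\<exists>e. \<forall>m\<in>R. int p dvd (M m j - (\<Sum>l\<in>J0. e l * M m l))"
proof (cases "j \<in> J0")
  case True
  have fJ0: "finite J0" using J J0(1) finite_subset by blast
  have "(\<Sum>l\<in>J0. (if l = j then 1 else 0) * M m l) = (\<Sum>l\<in>J0. if l = j then M m l else 0)" for m
    by (rule sum.cong) auto
  hence "(\<Sum>l\<in>J0. (if l = j then 1 else 0) * M m l) = M m j" for m
    using True by (simp only: sum.delta[OF fJ0] if_True)
  thus ?thesis by (intro exI[of _ "\<lambda>l. if l = j then 1 else 0"]) simp
next
  case False
  have fJ0: "finite J0" using J J0(1) finite_subset by blast
  have "\<not> indep_mod p M R (insert j J0)"
  proof
    assume "indep_mod p M R (insert j J0)"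
    hence "card (insert j J0) \<le> rank_mod p M R J"
      using J0(1) j by (intro rank_mod_attained(2)[OF J]) auto
    thus False using False fJ0 J0(3) by simp
  qed
  then obtain c where c0: "\<forall>m\<in>R. (\<Sum>l\<in>insert j J0. c l * M m l) mod int p = 0"
    and c_nz: "\<exists>l\<in>insert j J0. c l mod int p \<noteq> 0"
    unfolding indep_mod_def by blast
  have dep: "int p dvd (c j * M m j + (\<Sum>l\<in>J0. c l * M m l))" if "m \<in> R" for m
    using c0 that False fJ0 by (simp add: dvd_eq_mod_eq_0)
  txt \<open>The coefficient of column j is a unit: otherwise J0 alone would be dependent.\<close>
  have "\<not> int p dvd c j"
  proof
    assume cj: "int p dvd c j"
    hence "(\<Sum>l\<in>J0. c l * M m l) mod int p = 0" if "m \<in> R" for m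
    proof -
      have "int p dvd c j * M m j" using cj by simp
      hence "int p dvd (\<Sum>l\<in>J0. c l * M m l)" using dep[OF that] dvd_add_right_iff by blast
      thus ?thesis by (simp add: dvd_eq_mod_eq_0)
    qed
    hence "\<forall>l\<in>J0. c l mod int p = 0" using J0(2)[unfolded indep_mod_def, THEN spec[of _ c]] by blast
    thus False using c_nz cj by (auto simp: dvd_eq_mod_eq_0)
  qed
  then obtain u where u: "int p dvd (u * c j - 1)" using exists_inverse_mod_prime[OF prime] by blast
  have "int p dvd (M m j - (\<Sum>l\<in>J0. (- u * c l) * M m l))" if "m \<in> R" for m
  proof -
    have "(\<Sum>l\<in>J0. (- u * c l) * M m l) = - (u * (\<Sum>l\<in>J0. c l * M m l))"
      by (simp add: sum_distrib_left sum_negf mult.assoc)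
    hence "M m j - (\<Sum>l\<in>J0. (- u * c l) * M m l)
        = u * (c j * M m j + (\<Sum>l\<in>J0. c l * M m l)) - (u * c j - 1) * M m j"
      by (simp add: algebra_simps)
    thus ?thesis using dep[OF that] u by (simp add: dvd_diff)
  qed
  thus ?thesis by (intro exI[of _ "\<lambda>l. - u * c l"]) blast
qed

lemma span_mod_eq_if_columns_in_span:
  assumes J: "finite J" and J0: "J0 \<subseteq> J"
    and e: "\<forall>j\<in>J. \<forall>m\<in>R. int p dvd (M m j - (\<Sum>l\<in>J0. e j l * M m l))"
  shows "span_mod p M R J = span_mod p M R J0"
proof
  show "span_mod p M R J \<subseteq> span_mod p M R J0"
  proof
    fix x assume "x \<in> span_mod p M R J"
    then obtain c where x: "x = restrict (\<lambda>m. (\<Sum>l\<in>J. c l * M m l) mod int p) R"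
      unfolding span_mod_def by blast
    define c' where "c' = (\<lambda>l. \<Sum>j\<in>J. c j * e j l)"
    have "(\<Sum>l\<in>J. c l * M m l) mod int p = (\<Sum>l\<in>J0. c' l * M m l) mod int p" if m: "m \<in> R" for m
    proof -
      have "(\<Sum>l\<in>J0. c' l * M m l) = (\<Sum>j\<in>J. c j * (\<Sum>l\<in>J0. e j l * M m l))"
        unfolding c'_def by (simp add: sum_distrib_left sum_distrib_right mult.assoc) (rule sum.swap)
      hence "(\<Sum>l\<in>J. c l * M m l) - (\<Sum>l\<in>J0. c' l * M m l)
            = (\<Sum>j\<in>J. c j * (M m j - (\<Sum>l\<in>J0. e j l * M m l)))"
        by (simp add: sum_subtractf right_diff_distrib)
      moreover have "int p dvd (\<Sum>j\<in>J. c j * (M m j - (\<Sum>l\<in>J0. e j l * M m l)))"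
        using e m by (auto intro!: dvd_sum dvd_mult)
      ultimately show ?thesis by (simp add: mod_eq_dvd_iff)
    qed
    hence "x = restrict (\<lambda>m. (\<Sum>l\<in>J0. c' l * M m l) mod int p) R"
      unfolding x by (auto simp: restrict_def)
    thus "x \<in> span_mod p M R J0" unfolding span_mod_def by blast
  qed
next
  show "span_mod p M R J0 \<subseteq> span_mod p M R J"
  proof
    fix x assume "x \<in> span_mod p M R J0"
    then obtain c where x: "x = restrict (\<lambda>m. (\<Sum>l\<in>J0. c l * M m l) mod int p) R"
      unfolding span_mod_def by blast
    define c' where "c' = (\<lambda>l. if l \<in> J0 then c l else 0)"
    have "(\<Sum>l\<in>J. c' l * M m l) = (\<Sum>l\<in>J0. c l * M m l)" for m
      unfolding c'_def using J J0 by (intro sum.mono_neutral_cong_right) auto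
    hence "x = restrict (\<lambda>m. (\<Sum>l\<in>J. c' l * M m l) mod int p) R"
      unfolding x by simp
    thus "x \<in> span_mod p M R J" unfolding span_mod_def by blast
  qed
qed

lemma card_span_mod:
  assumes J: "finite J"
  shows "card (span_mod p M R J) = p ^ rank_mod p M R J"
proof -
  obtain J0 where J0: "J0 \<subseteq> J" "indep_mod p M R J0" "card J0 = rank_mod p M R J"
    using rank_mod_attained(1)[OF J] by blast
  have "\<forall>j\<in>J. \<exists>e. \<forall>m\<in>R. int p dvd (M m j - (\<Sum>l\<in>J0. e l * M m l))"
    using column_in_span_mod_of_maximal[OF J J0] by blast
  then obtain e where "\<forall>j\<in>J. \<forall>m\<in>R. int p dvd (M m j - (\<Sum>l\<in>J0. e j l * M m l))"
    by (metis bchoice)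
  hence "span_mod p M R J = span_mod p M R J0"
    by (rule span_mod_eq_if_columns_in_span[OF J J0(1)])
  thus ?thesis using card_span_mod_indep[OF finite_subset[OF J0(1) J] J0(2)] J0(3) by simp
qed

end

section \<open>Conditional entropy of uniformly distributed finite data\<close>

lemma card_eq_card_image_mult_fiber:
  assumes "finite S" and "\<And>x. x \<in> S \<Longrightarrow> card {x'\<in>S. g x' = g x} = k"
  shows "card S = card (g ` S) * k"
proof -
  have "card S = (\<Sum>x\<in>S. 1::nat)" by simp
  also have "\<dots> = (\<Sum>y\<in>g ` S. \<Sum>x\<in>{x\<in>S. g x = y}. 1)"
    by (rule sum.group[OF assms(1) finite_imageI[OF assms(1)] subset_refl, symmetric])
  also have "\<dots> = (\<Sum>y\<in>g ` S. k)" using assms(2) by (intro sum.cong) auto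
  finally show ?thesis by simp
qed

definition cond_entropy_count :: "'t set \<Rightarrow> ('t \<Rightarrow> 'x) \<Rightarrow> ('t \<Rightarrow> 'y) \<Rightarrow> real" where
  "cond_entropy_count T X Y = - (\<Sum>(x, y) \<in> (\<lambda>t. (X t, Y t)) ` T.
      let pxy = real (card {t\<in>T. X t = x \<and> Y t = y}) / real (card T);
          py = real (card {t\<in>T. Y t = y}) / real (card T)
      in pxy * log 2 (pxy / py))"

lemma cond_entropy_count_const_fibers:
  assumes T: "finite T" "T \<noteq> {}"
    and a: "\<And>t. t \<in> T \<Longrightarrow> card {t'\<in>T. X t' = X t \<and> Y t' = Y t} = a"
    and b: "\<And>t. t \<in> T \<Longrightarrow> card {t'\<in>T. Y t' = Y t} = b"
  shows "cond_entropy_count T X Y = log 2 b - log 2 a"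
proof -
  obtain t0 where t0: "t0 \<in> T" using T by blast
  have "t0 \<in> {t'\<in>T. X t' = X t0 \<and> Y t' = Y t0}" "t0 \<in> {t'\<in>T. Y t' = Y t0}" using t0 by auto
  hence ab: "a > 0" "b > 0" using a[OF t0] b[OF t0] T(1) by (auto simp: card_gt_0_iff)
  let ?XY = "\<lambda>t. (X t, Y t)"
  have N: "card T = card (?XY ` T) * a"
    by (rule card_eq_card_image_mult_fiber[OF T(1)]) (use a in simp)
  have "cond_entropy_count T X Y = - (\<Sum>(x, y) \<in> ?XY ` T. (real a / card T) * log 2 (real a / real b))"
    unfolding cond_entropy_count_def using a b
    by (intro arg_cong[where f = uminus] sum.cong refl) (auto simp: Let_def)
  also have "\<dots> = - (real (card (?XY ` T)) * (real a / card T) * log 2 (real a / real b))"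
    by simp
  also have "real (card (?XY ` T)) * (real a / card T) = 1"
    using N ab T by (simp add: card_gt_0_iff)
  finally show ?thesis using ab by (simp add: log_divide)
qed

lemma card_fibers_bij_betw:
  assumes bij: "bij_betw \<Psi> C T" and c: "c \<in> C"
    and X: "\<And>c. c \<in> C \<Longrightarrow> X (\<Psi> c) = \<alpha> (F c)" and inj: "inj_on \<alpha> (F ` C)"
  shows "card {t\<in>T. X t = X (\<Psi> c)} = card {c'\<in>C. F c' = F c}"
proof -
  have "{t\<in>T. X t = X (\<Psi> c)} = \<Psi> ` {c'\<in>C. F c' = F c}"
    using bij X inj c by (auto simp: bij_betw_def inj_on_eq_iff)
  moreover have "inj_on \<Psi> {c'\<in>C. F c' = F c}"
    using bij by (auto simp: bij_betw_def intro: inj_on_subset)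
  ultimately show ?thesis by (simp add: card_image)
qed


section \<open>Uniform codewords with independent dithers\<close>

text \<open>User l sends a uniform point of \<open>C l\<close> together with an independent dither drawn from \<open>N l\<close>.\<close>
definition uniform_dithered :: "nat set \<Rightarrow> (nat \<Rightarrow> 'a set) \<Rightarrow> (nat \<Rightarrow> 'b measure) \<Rightarrow> (nat \<Rightarrow> 'a \<times> 'b) measure" where
  "uniform_dithered I C N = PiM I (\<lambda>l. uniform_count_measure (C l) \<Otimes>\<^sub>M N l)"

definition fst_comps :: "nat set \<Rightarrow> (nat \<Rightarrow> 'a \<times> 'b) \<Rightarrow> nat \<Rightarrow> 'a" where
  "fst_comps I \<omega> = (\<lambda>l\<in>I. fst (\<omega> l))"

definition fst_cylinder :: "nat set \<Rightarrow> (nat \<Rightarrow> 'b measure) \<Rightarrow> (nat \<Rightarrow> 'a) \<Rightarrow> (nat \<Rightarrow> 'a \<times> 'b) set" where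
  "fst_cylinder I N t = PiE I (\<lambda>l. {t l} \<times> space (N l))"

context
  fixes I :: "nat set" and C :: "nat \<Rightarrow> 'a set" and N :: "nat \<Rightarrow> 'b measure"
  assumes I: "finite I" and C: "\<And>l. l \<in> I \<Longrightarrow> finite (C l) \<and> C l \<noteq> {}"
    and N: "\<And>l. l \<in> I \<Longrightarrow> prob_space (N l)"
begin

lemma space_uniform_dithered: "space (uniform_dithered I C N) = PiE I (\<lambda>l. C l \<times> space (N l))"
  by (simp add: uniform_dithered_def space_PiM space_pair_measure space_uniform_count_measure)

lemma fst_comps_image_space: "fst_comps I ` space (uniform_dithered I C N) = PiE I C"
proof
  show "fst_comps I ` space (uniform_dithered I C N) \<subseteq> PiE I C"
    unfolding space_uniform_dithered fst_comps_def by (auto simp: PiE_iff mem_Times_iff)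
  show "PiE I C \<subseteq> fst_comps I ` space (uniform_dithered I C N)"
  proof
    fix t assume t: "t \<in> PiE I C"
    have "l \<in> I \<Longrightarrow> space (N l) \<noteq> {}" for l using N prob_space.not_empty by blast
    moreover define \<omega> where "\<omega> = (\<lambda>l\<in>I. (t l, SOME y. y \<in> space (N l)))"
    ultimately have "\<omega> \<in> space (uniform_dithered I C N)"
      unfolding space_uniform_dithered using t by (auto simp: PiE_iff some_in_eq)
    moreover have "fst_comps I \<omega> = t"
      unfolding fst_comps_def \<omega>_def using t by (auto simp: fun_eq_iff PiE_iff extensional_def)
    ultimately show "t \<in> fst_comps I ` space (uniform_dithered I C N)" by blast
  qed
qed

lemma emeasure_fst_cylinder:
  assumes t: "t \<in> PiE I C"
  shows "emeasure (uniform_dithered I C N) (fst_cylinder I N t) = ennreal (1 / real (card (PiE I C)))"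
proof -
  let ?M = "\<lambda>l. uniform_count_measure (C l) \<Otimes>\<^sub>M N l"
  have "fst_cylinder I N t = prod_emb I ?M I (PiE I (\<lambda>l. {t l} \<times> space (N l)))"
    unfolding fst_cylinder_def using t
    by (subst prod_emb_PiE) (auto simp: space_pair_measure space_uniform_count_measure PiE_iff)
  hence "emeasure (uniform_dithered I C N) (fst_cylinder I N t)
      = (\<Prod>l\<in>I. emeasure (?M l) ({t l} \<times> space (N l)))"
    unfolding uniform_dithered_def using I t C N
    by (simp only:, intro emeasure_PiM_emb)
       (auto intro!: pair_measureI prob_space_pair prob_space_uniform_count_measure
             simp: sets_uniform_count_measure PiE_iff)
  also have "\<dots> = (\<Prod>l\<in>I. ennreal (1 / real (card (C l))))"
  proof (rule prod.cong[OF refl])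
    fix l assume l: "l \<in> I"
    interpret Nl: prob_space "N l" using N l .
    have tl: "t l \<in> C l" using t l by auto
    have "emeasure (uniform_count_measure (C l) \<Otimes>\<^sub>M N l) ({t l} \<times> space (N l))
        = emeasure (uniform_count_measure (C l)) {t l} * emeasure (N l) (space (N l))"
      using tl by (intro Nl.emeasure_pair_measure_Times) (auto simp: sets_uniform_count_measure)
    also have "\<dots> = ennreal (1 / real (card (C l)))"
      using C[OF l] tl
      by (simp add: emeasure_uniform_count_measure Nl.emeasure_space_1
          ennreal_of_nat_eq_real_of_nat divide_ennreal)
    finally show "emeasure (uniform_count_measure (C l) \<Otimes>\<^sub>M N l) ({t l} \<times> space (N l))
        = ennreal (1 / real (card (C l)))" .
  qed
  also have "\<dots> = ennreal (1 / real (card (PiE I C)))"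
    using I by (simp add: prod_ennreal card_PiE prod_dividef)
  finally show ?thesis .
qed

lemma measure_fst_comps_event:
  "measure (uniform_dithered I C N) {\<omega>\<in>space (uniform_dithered I C N). P (fst_comps I \<omega>)}
     = real (card {t\<in>PiE I C. P t}) / real (card (PiE I C))"
proof -
  let ?S = "{t\<in>PiE I C. P t}"
  have fin: "finite (PiE I C)" using I C by (simp add: finite_PiE)
  have eq: "{\<omega>\<in>space (uniform_dithered I C N). P (fst_comps I \<omega>)} = (\<Union>t\<in>?S. fst_cylinder I N t)"
  proof (rule set_eqI, rule iffI)
    fix \<omega> assume w: "\<omega> \<in> {\<omega>\<in>space (uniform_dithered I C N). P (fst_comps I \<omega>)}"
    hence "fst_comps I \<omega> \<in> ?S" using fst_comps_image_space by auto
    moreover have "\<omega> \<in> fst_cylinder I N (fst_comps I \<omega>)"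
      using w unfolding fst_cylinder_def space_uniform_dithered fst_comps_def
      by (auto simp: PiE_iff mem_Times_iff)
    ultimately show "\<omega> \<in> (\<Union>t\<in>?S. fst_cylinder I N t)" by blast
  next
    fix \<omega> assume "\<omega> \<in> (\<Union>t\<in>?S. fst_cylinder I N t)"
    then obtain t where t: "t \<in> ?S" "\<omega> \<in> fst_cylinder I N t" by blast
    have "\<omega> \<in> space (uniform_dithered I C N)"
      using t unfolding fst_cylinder_def space_uniform_dithered by (auto simp: PiE_iff)
    moreover have "fst_comps I \<omega> = t"
      using t unfolding fst_cylinder_def fst_comps_def
      by (auto simp: PiE_iff fun_eq_iff extensional_def)
    ultimately show "\<omega> \<in> {\<omega>\<in>space (uniform_dithered I C N). P (fst_comps I \<omega>)}" using t by simp
  qed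
  have disj: "disjoint_family_on (fst_cylinder I N) ?S"
    unfolding disjoint_family_on_def
  proof (intro ballI impI)
    fix t t' assume t: "t \<in> ?S" and t': "t' \<in> ?S" and ne: "t \<noteq> t'"
    then obtain l where l: "l \<in> I" "t l \<noteq> t' l" by (metis (mono_tags, lifting) PiE_ext mem_Collect_eq)
    show "fst_cylinder I N t \<inter> fst_cylinder I N t' = {}"
      using l unfolding fst_cylinder_def by (auto simp: PiE_iff mem_Times_iff)
  qed
  have sets: "fst_cylinder I N t \<in> sets (uniform_dithered I C N)" if "t \<in> PiE I C" for t
    unfolding fst_cylinder_def uniform_dithered_def using I that
    by (intro sets_PiM_I_finite) (auto intro!: pair_measureI simp: sets_uniform_count_measure PiE_iff)
  have "emeasure (uniform_dithered I C N) {\<omega>\<in>space (uniform_dithered I C N). P (fst_comps I \<omega>)}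
      = (\<Sum>t\<in>?S. emeasure (uniform_dithered I C N) (fst_cylinder I N t))"
    unfolding eq using sets fin disj by (intro sum_emeasure[symmetric]) auto
  also have "\<dots> = (\<Sum>t\<in>?S. ennreal (1 / real (card (PiE I C))))"
    by (intro sum.cong refl emeasure_fst_cylinder) auto
  also have "\<dots> = ennreal (real (card ?S) / real (card (PiE I C)))"
    by (simp add: ennreal_of_nat_eq_real_of_nat ennreal_mult'[symmetric])
  finally show ?thesis unfolding measure_def by simp
qed

lemma cond_entropy_bits_uniform_dithered:
  assumes "\<And>\<omega>. \<omega> \<in> space (uniform_dithered I C N) \<Longrightarrow> X \<omega> = X' (fst_comps I \<omega>)"
    and "\<And>\<omega>. \<omega> \<in> space (uniform_dithered I C N) \<Longrightarrow> Y \<omega> = Y' (fst_comps I \<omega>)"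
  shows "cond_entropy_bits (uniform_dithered I C N) X Y = cond_entropy_count (PiE I C) X' Y'"
proof -
  have "(\<lambda>\<omega>. (X \<omega>, Y \<omega>)) ` space (uniform_dithered I C N)
      = (\<lambda>t. (X' t, Y' t)) ` (fst_comps I ` space (uniform_dithered I C N))"
    using assms by (auto simp: image_image intro!: image_cong)
  hence im: "(\<lambda>\<omega>. (X \<omega>, Y \<omega>)) ` space (uniform_dithered I C N) = (\<lambda>t. (X' t, Y' t)) ` PiE I C"
    using fst_comps_image_space by simp
  have "measure (uniform_dithered I C N) {\<omega>\<in>space (uniform_dithered I C N). X \<omega> = x \<and> Y \<omega> = y}
      = real (card {t\<in>PiE I C. X' t = x \<and> Y' t = y}) / real (card (PiE I C))" for x y
  proof -
    have "{\<omega>\<in>space (uniform_dithered I C N). X \<omega> = x \<and> Y \<omega> = y}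
      = {\<omega>\<in>space (uniform_dithered I C N). X' (fst_comps I \<omega>) = x \<and> Y' (fst_comps I \<omega>) = y}"
      using assms by auto
    thus ?thesis using measure_fst_comps_event[of "\<lambda>t. X' t = x \<and> Y' t = y"] by simp
  qed
  moreover have "measure (uniform_dithered I C N) {\<omega>\<in>space (uniform_dithered I C N). Y \<omega> = y}
      = real (card {t\<in>PiE I C. Y' t = y}) / real (card (PiE I C))" for y
  proof -
    have "{\<omega>\<in>space (uniform_dithered I C N). Y \<omega> = y}
      = {\<omega>\<in>space (uniform_dithered I C N). Y' (fst_comps I \<omega>) = y}"
      using assms by auto
    thus ?thesis using measure_fst_comps_event[of "\<lambda>t. Y' t = y"] by simp
  qed
  ultimately show ?thesis unfolding cond_entropy_bits_def cond_entropy_count_def im by simp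
qed

end

section \<open>Reduced linear combinations of digit vectors\<close>

definition coeff_vectors :: "nat \<Rightarrow> nat \<Rightarrow> nat \<Rightarrow> (nat \<Rightarrow> nat) \<Rightarrow> (nat \<Rightarrow> nat \<Rightarrow> int) set" where
  "coeff_vectors p L lo ic = PiE {1..L} (\<lambda>l. digits p lo (ic l))"

definition mix :: "nat \<Rightarrow> (nat \<Rightarrow> nat \<Rightarrow> int) \<Rightarrow> nat \<Rightarrow> (nat \<Rightarrow> nat \<Rightarrow> int) \<Rightarrow> nat \<Rightarrow> nat \<Rightarrow> int" where
  "mix p A L c m = (\<lambda>j. (\<Sum>l\<in>{1..L}. A m l * c l j) mod int p)"

definition mix_on :: "nat \<Rightarrow> (nat \<Rightarrow> nat \<Rightarrow> int) \<Rightarrow> nat \<Rightarrow> nat set \<Rightarrow> (nat \<Rightarrow> nat \<Rightarrow> int) \<Rightarrow> nat \<Rightarrow> nat \<Rightarrow> int" where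
  "mix_on p A L R c = restrict (mix p A L c) R"

definition users_above :: "nat \<Rightarrow> (nat \<Rightarrow> nat) \<Rightarrow> nat \<Rightarrow> nat set" where
  "users_above L ic j = {l\<in>{1..L}. j \<le> ic l}"

lemma mix_on_eq_iff: "mix_on p A L R c' = mix_on p A L R c \<longleftrightarrow> (\<forall>m\<in>R. mix p A L c' m = mix p A L c m)"
  unfolding mix_on_def by (metis restrict_ext restrict_apply')

locale digit_mixing =
  fixes p L lo top :: nat and ic :: "nat \<Rightarrow> nat" and A :: "nat \<Rightarrow> nat \<Rightarrow> int"
  assumes prime_p: "prime p" and digits_between: "\<And>l. l \<in> {1..L} \<Longrightarrow> lo \<le> ic l \<and> ic l \<le> top"
begin

lemma p_pos: "0 < int p"
  using prime_p prime_gt_0_nat by simp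

lemma finite_coeff_vectors: "finite (coeff_vectors p L lo ic)"
  unfolding coeff_vectors_def by (simp add: finite_PiE finite_digits)

lemma zero_in_coeff_vectors: "(\<lambda>l\<in>{1..L}. \<lambda>j. 0) \<in> coeff_vectors p L lo ic"
  unfolding coeff_vectors_def digits_def using p_pos by auto

lemma coeff_vectors_zero:
  "c \<in> coeff_vectors p L lo ic \<Longrightarrow> l \<in> {1..L} \<Longrightarrow> j \<notin> {lo<..ic l} \<Longrightarrow> c l j = 0"
  unfolding coeff_vectors_def digits_def by auto

lemma coeff_vectors_zero_above:
  "c \<in> coeff_vectors p L lo ic \<Longrightarrow> j \<notin> {lo<..top} \<Longrightarrow> (\<Sum>l\<in>{1..L}. A m l * c l j) = 0"
  using coeff_vectors_zero digits_between by (intro sum.neutral) force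

lemma mix_in_digits: "c \<in> coeff_vectors p L lo ic \<Longrightarrow> mix p A L c m \<in> digits p lo top"
  using coeff_vectors_zero_above p_pos unfolding digits_def mix_def by auto

definition shift :: "(nat \<Rightarrow> nat \<Rightarrow> int) \<Rightarrow> (nat \<Rightarrow> nat \<Rightarrow> int) \<Rightarrow> nat \<Rightarrow> nat \<Rightarrow> int" where
  "shift d c = (\<lambda>l\<in>{1..L}. \<lambda>j. (c l j + d l j) mod int p)"

lemma shift_in_coeff_vectors:
  assumes "c \<in> coeff_vectors p L lo ic" and "\<And>l j. l \<in> {1..L} \<Longrightarrow> j \<notin> {lo<..ic l} \<Longrightarrow> d l j = 0"
  shows "shift d c \<in> coeff_vectors p L lo ic"
  using assms coeff_vectors_zero[OF assms(1)] p_pos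
  unfolding coeff_vectors_def digits_def shift_def by auto

lemma inj_on_shift: "inj_on (shift d) (coeff_vectors p L lo ic)"
proof (rule inj_onI)
  fix c c' assume c: "c \<in> coeff_vectors p L lo ic" and c': "c' \<in> coeff_vectors p L lo ic"
    and eq: "shift d c = shift d c'"
  have "c l j = c' l j" if l: "l \<in> {1..L}" and j: "j \<in> {lo<..ic l}" for l j
  proof (rule eq_if_dvd_diff_bounded[of _ "int p"])
    have "(c l j + d l j) mod int p = (c' l j + d l j) mod int p"
      using fun_cong[OF fun_cong[OF eq, of l], of j] l unfolding shift_def by simp
    thus "int p dvd (c l j - c' l j)" by (simp add: mod_eq_dvd_iff)
  qed (use c c' l j in \<open>auto simp: coeff_vectors_def digits_def\<close>)
  moreover have "c l = c' l" if "l \<notin> {1..L}" for l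
    using that c c' unfolding coeff_vectors_def by (auto simp: PiE_def extensional_def)
  moreover have "c l j = c' l j" if "l \<in> {1..L}" "j \<notin> {lo<..ic l}" for l j
    using coeff_vectors_zero[OF c that] coeff_vectors_zero[OF c' that] by simp
  ultimately show "c = c'" by (intro ext) metis
qed

lemma mix_shift:
  "mix p A L (shift d c) m j = ((\<Sum>l\<in>{1..L}. A m l * c l j) + (\<Sum>l\<in>{1..L}. A m l * d l j)) mod int p"
proof -
  have "mix p A L (shift d c) m j = (\<Sum>l\<in>{1..L}. ((c l j + d l j) mod int p) * A m l) mod int p"
    unfolding mix_def shift_def by (simp add: mult.commute)
  also have "\<dots> = (\<Sum>l\<in>{1..L}. (c l j + d l j) * A m l) mod int p"
    by (rule sum_mod_coeffs)
  finally show ?thesis by (simp add: sum.distrib algebra_simps)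
qed

text \<open>Translating by \<open>c' - c\<close> carries the fibre of c into the fibre of c'.\<close>
lemma card_mix_on_fiber_le:
  assumes c: "c \<in> coeff_vectors p L lo ic" and c': "c' \<in> coeff_vectors p L lo ic"
  shows "card {x\<in>coeff_vectors p L lo ic. mix_on p A L R x = mix_on p A L R c}
       \<le> card {x\<in>coeff_vectors p L lo ic. mix_on p A L R x = mix_on p A L R c'}"
proof (rule card_inj_on_le)
  define d where "d = (\<lambda>l j. c' l j - c l j)"
  have d0: "d l j = 0" if "l \<in> {1..L}" "j \<notin> {lo<..ic l}" for l j
    unfolding d_def using coeff_vectors_zero[OF c that] coeff_vectors_zero[OF c' that] by simp
  show "inj_on (shift d) {x\<in>coeff_vectors p L lo ic. mix_on p A L R x = mix_on p A L R c}"
    using inj_on_shift by (rule inj_on_subset) auto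
  show "finite {x\<in>coeff_vectors p L lo ic. mix_on p A L R x = mix_on p A L R c'}"
    using finite_coeff_vectors by simp
  show "shift d ` {x\<in>coeff_vectors p L lo ic. mix_on p A L R x = mix_on p A L R c}
      \<subseteq> {x\<in>coeff_vectors p L lo ic. mix_on p A L R x = mix_on p A L R c'}"
  proof clarify
    fix x assume x: "x \<in> coeff_vectors p L lo ic" and fib: "mix_on p A L R x = mix_on p A L R c"
    have "mix p A L (shift d x) m j = mix p A L c' m j" if m: "m \<in> R" for m j
    proof -
      have dvd: "int p dvd ((\<Sum>l\<in>{1..L}. A m l * x l j) - (\<Sum>l\<in>{1..L}. A m l * c l j))"
        using fib m unfolding mix_on_eq_iff mix_def by (metis mod_eq_dvd_iff)
      have "(\<Sum>l\<in>{1..L}. A m l * x l j) + (\<Sum>l\<in>{1..L}. A m l * d l j)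
          - (\<Sum>l\<in>{1..L}. A m l * c' l j) = (\<Sum>l\<in>{1..L}. A m l * x l j) - (\<Sum>l\<in>{1..L}. A m l * c l j)"
        unfolding d_def by (simp add: sum_subtractf right_diff_distrib)
      hence "int p dvd ((\<Sum>l\<in>{1..L}. A m l * x l j) + (\<Sum>l\<in>{1..L}. A m l * d l j)
          - (\<Sum>l\<in>{1..L}. A m l * c' l j))"
        using dvd by (simp only:)
      thus ?thesis unfolding mix_shift by (simp add: mix_def mod_eq_dvd_iff)
    qed
    thus "shift d x \<in> coeff_vectors p L lo ic \<and> mix_on p A L R (shift d x) = mix_on p A L R c'"
      using shift_in_coeff_vectors[OF x d0] unfolding mix_on_eq_iff by auto
  qed
qed

lemma card_coeff_vectors_eq_image_mult_fiber:
  "card (coeff_vectors p L lo ic) = card (mix_on p A L R ` coeff_vectors p L lo ic)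
     * card {x\<in>coeff_vectors p L lo ic. mix_on p A L R x = mix_on p A L R (\<lambda>l\<in>{1..L}. \<lambda>j. 0)}"
  using finite_coeff_vectors zero_in_coeff_vectors
  by (intro card_eq_card_image_mult_fiber antisym card_mix_on_fiber_le) auto

lemma sum_users_above:
  assumes c: "c \<in> coeff_vectors p L lo ic" and j: "j \<in> {lo<..top}"
  shows "(\<Sum>l\<in>{1..L}. A m l * c l j) = (\<Sum>l\<in>users_above L ic j. c l j * A m l)"
proof -
  have "(\<Sum>l\<in>{1..L}. A m l * c l j) = (\<Sum>l\<in>users_above L ic j. A m l * c l j)"
    using coeff_vectors_zero[OF c] j
    by (intro sum.mono_neutral_right[symmetric, symmetric]) (auto simp: users_above_def)
  thus ?thesis by (simp add: mult.commute)
qed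

definition columns :: "nat set \<Rightarrow> (nat \<Rightarrow> nat \<Rightarrow> int) \<Rightarrow> nat \<Rightarrow> nat \<Rightarrow> int" where
  "columns R H = (\<lambda>j\<in>{lo<..top}. restrict (\<lambda>m. H m j) R)"

lemma inj_on_columns: "inj_on (columns R) (mix_on p A L R ` coeff_vectors p L lo ic)"
proof (rule inj_onI)
  fix H H' assume "H \<in> mix_on p A L R ` coeff_vectors p L lo ic"
    "H' \<in> mix_on p A L R ` coeff_vectors p L lo ic" and eq: "columns R H = columns R H'"
  then obtain c c' where c: "c \<in> coeff_vectors p L lo ic" "H = mix_on p A L R c"
    and c': "c' \<in> coeff_vectors p L lo ic" "H' = mix_on p A L R c'" by blast
  have "H m j = H' m j" for m j
  proof (cases "m \<in> R \<and> j \<in> {lo<..top}")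
    case True
    thus ?thesis using fun_cong[OF fun_cong[OF eq, of j], of m] unfolding columns_def by simp
  next
    case False
    thus ?thesis using c c' coeff_vectors_zero_above[OF c(1)] coeff_vectors_zero_above[OF c'(1)]
      by (auto simp: mix_on_def mix_def)
  qed
  thus "H = H'" by blast
qed

lemma columns_image:
  "columns R ` (mix_on p A L R ` coeff_vectors p L lo ic)
     = PiE {lo<..top} (\<lambda>j. span_mod p A R (users_above L ic j))"
proof (rule set_eqI, rule iffI)
  fix P assume "P \<in> columns R ` (mix_on p A L R ` coeff_vectors p L lo ic)"
  then obtain c where c: "c \<in> coeff_vectors p L lo ic" "P = columns R (mix_on p A L R c)" by blast
  have "P j = restrict (\<lambda>m. (\<Sum>l\<in>users_above L ic j. c l j * A m l) mod int p) R"
    if "j \<in> {lo<..top}" for j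
    using c that sum_users_above[OF c(1) that]
    by (auto simp: columns_def mix_on_def mix_def restrict_def)
  hence "P j \<in> span_mod p A R (users_above L ic j)" if "j \<in> {lo<..top}" for j
    using that unfolding span_mod_def by (intro CollectI exI[of _ "\<lambda>l. c l j"]) simp
  moreover have "P j = undefined" if "j \<notin> {lo<..top}" for j
    using that unfolding c(2) columns_def by auto
  ultimately show "P \<in> PiE {lo<..top} (\<lambda>j. span_mod p A R (users_above L ic j))" by blast
next
  fix P assume P: "P \<in> PiE {lo<..top} (\<lambda>j. span_mod p A R (users_above L ic j))"
  hence "\<forall>j\<in>{lo<..top}. \<exists>e. P j = restrict (\<lambda>m. (\<Sum>l\<in>users_above L ic j. e l * A m l) mod int p) R"
    unfolding span_mod_def by blast
  then obtain E where E: "\<forall>j\<in>{lo<..top}.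
      P j = restrict (\<lambda>m. (\<Sum>l\<in>users_above L ic j. E j l * A m l) mod int p) R"
    by (metis bchoice)
  define c where "c = (\<lambda>l\<in>{1..L}. \<lambda>j. if j \<in> {lo<..ic l} then E j l mod int p else 0)"
  have c: "c \<in> coeff_vectors p L lo ic" unfolding c_def coeff_vectors_def digits_def using p_pos by auto
  have "columns R (mix_on p A L R c) j m = P j m" for j m
  proof (cases "j \<in> {lo<..top} \<and> m \<in> R")
    case True
    hence "(\<Sum>l\<in>users_above L ic j. c l j * A m l) = (\<Sum>l\<in>users_above L ic j. (E j l mod int p) * A m l)"
      by (intro sum.cong) (auto simp: c_def users_above_def)
    thus ?thesis using True E sum_users_above[OF c, of j m] sum_mod_coeffs[of "E j" "int p"]
      by (simp add: columns_def mix_on_def mix_def)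
  qed (use P E in \<open>auto simp: columns_def PiE_def extensional_def\<close>)
  thus "P \<in> columns R ` (mix_on p A L R ` coeff_vectors p L lo ic)" using c by (metis ext image_eqI)
qed

lemma card_mix_on_image:
  "card (mix_on p A L R ` coeff_vectors p L lo ic)
     = (\<Prod>j\<in>{lo<..top}. p ^ rank_mod p A R (users_above L ic j))"
proof -
  have "card (mix_on p A L R ` coeff_vectors p L lo ic)
      = card (PiE {lo<..top} (\<lambda>j. span_mod p A R (users_above L ic j)))"
    using card_image[OF inj_on_columns] columns_image by metis
  also have "\<dots> = (\<Prod>j\<in>{lo<..top}. p ^ rank_mod p A R (users_above L ic j))"
    by (simp add: card_PiE card_span_mod[OF prime_p] users_above_def)
  finally show ?thesis .
qed

end

section \<open>Entropy of the computed codewords under a common shaping lattice\<close>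

text \<open>The common shaping lattice is \<open>lat lo\<close> (the paper's \<open>\<Lambda>\<^sub>1\<close>) and user l codes with \<open>lat (ic l)\<close>;
  \<open>computed m\<close> is \<open>v\<^sub>m\<close> as a function of the codeword--dither pairs.\<close>
locale common_shaping = constrA_lattices \<gamma> G B K
  for \<gamma> :: nat and G :: "'n::finite \<Rightarrow> nat \<Rightarrow> int" and B :: "real^'n^'n" and K :: nat +
  fixes L lo top :: nat and ic :: "nat \<Rightarrow> nat" and Q :: "(real^'n) set \<Rightarrow> real^'n \<Rightarrow> real^'n"
    and \<beta> :: "nat \<Rightarrow> real" and A :: "nat \<Rightarrow> nat \<Rightarrow> int"
  assumes nearest: "nearest_quantizer (lat lo) (Q (lat lo))"
    and ic_between: "\<And>l. l \<in> {1..L} \<Longrightarrow> lo \<le> ic l \<and> ic l \<le> top"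
    and lo_le_top: "lo \<le> top" and top_le_K: "top \<le> K"
    and beta_pos: "\<And>l. l \<in> {1..L} \<Longrightarrow> \<beta> l > 0"
begin

definition codebook :: "nat \<Rightarrow> (real^'n) set" where
  "codebook l = lat (ic l) \<inter> voronoi Q (lat lo)"

definition dither :: "nat \<Rightarrow> (real^'n) measure" where
  "dither l = uniform_measure lebesgue ((\<lambda>x. (1 / \<beta> l) *\<^sub>R x) ` voronoi Q (lat lo))"

definition computed :: "nat \<Rightarrow> (nat \<Rightarrow> (real^'n) \<times> (real^'n)) \<Rightarrow> real^'n" where
  "computed m \<omega> = modl Q (lat lo)
     (\<Sum>l\<in>{1..L}. of_int (A m l) *\<^sub>R (fst (\<omega> l) - Q (lat lo) (fst (\<omega> l) - \<beta> l *\<^sub>R snd (\<omega> l))))"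

definition mixed :: "nat \<Rightarrow> (nat \<Rightarrow> real^'n) \<Rightarrow> real^'n" where
  "mixed m t = modl Q (lat lo) (\<Sum>l\<in>{1..L}. of_int (A m l) *\<^sub>R t l)"

definition coset_reps :: "(nat \<Rightarrow> nat \<Rightarrow> int) \<Rightarrow> nat \<Rightarrow> real^'n" where
  "coset_reps c = (\<lambda>l\<in>{1..L}. coset_rep Q lo (c l))"

sublocale digit_mixing \<gamma> L lo top ic A
  using prime ic_between by unfold_locales

abbreviation coeff_set :: "(nat \<Rightarrow> nat \<Rightarrow> int) set" where
  "coeff_set \<equiv> coeff_vectors \<gamma> L lo ic"

lemma prob_space_dither:
  assumes "l \<in> {1..L}"
  shows "prob_space (dither l)"
proof -
  have sets: "voronoi Q (lat lo) \<in> sets lebesgue"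
    by (rule voronoi_sets_lebesgue[of "lat lo" Q, OF nearest countable_constrA constrA_zero])
  have "voronoi Q (lat lo) \<in> fmeasurable lebesgue"
    by (rule bounded_set_imp_lmeasurable[OF bounded_voronoi_constrA[where a=lo and Q=Q, OF nearest] sets])
  hence "emeasure lebesgue (voronoi Q (lat lo)) \<noteq> \<infinity>" unfolding fmeasurable_def by auto
  thus ?thesis unfolding dither_def using beta_pos[OF assms]
    by (intro prob_space_uniform_measure_scaled emeasure_voronoi_nonzero[of "lat lo" Q, OF nearest countable_constrA sets])
qed

lemma codebook_eq_image:
  assumes "l \<in> {1..L}"
  shows "codebook l = coset_rep Q lo ` digits \<gamma> lo (ic l)"
  unfolding codebook_def using ic_between[OF assms] top_le_K
  by (intro constrA_inter_voronoi_eq_image[where a=lo and b="ic l" and Q=Q, OF nearest]) auto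

lemma finite_codebook:
  assumes "l \<in> {1..L}"
  shows "finite (codebook l) \<and> codebook l \<noteq> {}"
  unfolding codebook_eq_image[OF assms] using zero_in_digits[OF gamma_pos] finite_digits by blast

lemma bij_betw_coset_reps: "bij_betw coset_reps coeff_set (PiE {1..L} codebook)"
proof (rule bij_betw_imageI)
  have inj: "inj_on (coset_rep Q lo) (digits \<gamma> lo (ic l))" if "l \<in> {1..L}" for l
    using inj_on_coset_rep[where a=lo and b="ic l" and Q=Q, OF nearest] ic_between[OF that] top_le_K by auto
  show "inj_on coset_reps coeff_set"
  proof (rule inj_onI, rule ext)
    fix c c' l assume c: "c \<in> coeff_set" and c': "c' \<in> coeff_set" and eq: "coset_reps c = coset_reps c'"
    show "c l = c' l"
    proof (cases "l \<in> {1..L}")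
      case True
      have "c l \<in> digits \<gamma> lo (ic l)" "c' l \<in> digits \<gamma> lo (ic l)"
        using c c' True by (auto simp: coeff_vectors_def)
      thus ?thesis using fun_cong[OF eq, of l] True inj_onD[OF inj[OF True]]
        by (simp add: coset_reps_def)
    qed (use c c' in \<open>auto simp: coeff_vectors_def PiE_def extensional_def\<close>)
  qed
  show "coset_reps ` coeff_set = PiE {1..L} codebook"
  proof
    show "coset_reps ` coeff_set \<subseteq> PiE {1..L} codebook"
      using codebook_eq_image by (auto simp: coset_reps_def coeff_vectors_def PiE_iff)
    show "PiE {1..L} codebook \<subseteq> coset_reps ` coeff_set"
    proof
      fix t assume t: "t \<in> PiE {1..L} codebook"
      hence "\<forall>l\<in>{1..L}. \<exists>d. d \<in> digits \<gamma> lo (ic l) \<and> t l = coset_rep Q lo d"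
        using codebook_eq_image by (auto simp: PiE_iff)
      then obtain d where d: "\<forall>l\<in>{1..L}. d l \<in> digits \<gamma> lo (ic l) \<and> t l = coset_rep Q lo (d l)"
        by (metis bchoice)
      hence "restrict d {1..L} \<in> coeff_set" "coset_reps (restrict d {1..L}) = t"
        using t by (auto simp: coeff_vectors_def coset_reps_def fun_eq_iff PiE_iff extensional_def)
      thus "t \<in> coset_reps ` coeff_set" by (metis image_eqI)
    qed
  qed
qed

text \<open>All shaping lattices equal \<open>lat lo\<close>, so the dithers vanish modulo \<open>lat lo\<close>.\<close>
lemma computed_eq_mixed: "computed m \<omega> = mixed m (fst_comps {1..L} \<omega>)"
proof -
  let ?q = "\<lambda>l. Q (lat lo) (fst (\<omega> l) - \<beta> l *\<^sub>R snd (\<omega> l))"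
  have "(\<Sum>l\<in>{1..L}. of_int (A m l) *\<^sub>R (fst (\<omega> l) - ?q l))
      = (\<Sum>l\<in>{1..L}. of_int (A m l) *\<^sub>R fst_comps {1..L} \<omega> l) - (\<Sum>l\<in>{1..L}. of_int (A m l) *\<^sub>R ?q l)"
    by (simp add: fst_comps_def scaleR_diff_right sum_subtractf)
  moreover have "(\<Sum>l\<in>{1..L}. of_int (A m l) *\<^sub>R ?q l) \<in> lat lo"
    using quantizer_in[of "lat lo" Q, OF nearest] by (intro constrA_sum constrA_scale) auto
  ultimately show ?thesis
    unfolding computed_def mixed_def using modl_diff_lattice[of "lat lo" Q, OF nearest] by simp
qed

lemma mixed_coset_reps:
  assumes c: "c \<in> coeff_set"
  shows "mixed m (coset_reps c) = coset_rep Q lo (mix \<gamma> A L c m)"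
proof -
  let ?e = "\<lambda>l. embed (codeword K (c l))"
  let ?s = "\<lambda>j. \<Sum>l\<in>{1..L}. A m l * c l j"
  have "(\<Sum>l\<in>{1..L}. of_int (A m l) *\<^sub>R coset_reps c l)
      = (\<Sum>l\<in>{1..L}. of_int (A m l) *\<^sub>R ?e l) - (\<Sum>l\<in>{1..L}. of_int (A m l) *\<^sub>R Q (lat lo) (?e l))"
    unfolding coset_reps_def coset_rep_def modl_def by (simp add: scaleR_diff_right sum_subtractf)
  moreover have "(\<Sum>l\<in>{1..L}. of_int (A m l) *\<^sub>R Q (lat lo) (?e l)) \<in> lat lo"
    using quantizer_in[of "lat lo" Q, OF nearest] by (intro constrA_sum constrA_scale) auto
  ultimately have "mixed m (coset_reps c) = modl Q (lat lo) (\<Sum>l\<in>{1..L}. of_int (A m l) *\<^sub>R ?e l)"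
    unfolding mixed_def using modl_diff_lattice[of "lat lo" Q, OF nearest] by simp
  also have "(\<Sum>l\<in>{1..L}. of_int (A m l) *\<^sub>R ?e l) = embed (codeword K ?s)"
  proof -
    have "codeword K ?s = (\<lambda>r. \<Sum>l\<in>{1..L}. A m l * codeword K (c l) r)"
      by (rule ext) (simp add: codeword_sum codeword_scale)
    thus ?thesis by (simp add: embed_sum embed_scale)
  qed
  also have "\<dots> = embed (codeword K (mix \<gamma> A L c m)) + embed (codeword K (\<lambda>j. ?s j - mix \<gamma> A L c m j))"
    by (subst embed_add[symmetric]) (simp add: codeword_add[symmetric])
  also have "modl Q (lat lo) \<dots> = modl Q (lat lo) (embed (codeword K (mix \<gamma> A L c m)))"
  proof (rule modl_add_lattice[of "lat lo" Q, OF nearest])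
    txt \<open>The reduction modulo \<open>\<gamma>\<close> changes the combination by a vector of \<open>\<gamma>\<int>\<^sup>n\<close>.\<close>
    have "codeword K (\<lambda>j. ?s j - mix \<gamma> A L c m j) \<in> int_lattice lo"
      by (intro int_lattice_dvd codeword_dvd) (simp add: mix_def mod_eq_dvd_iff[symmetric])
    thus "embed (codeword K (\<lambda>j. ?s j - mix \<gamma> A L c m j)) \<in> lat lo" unfolding mem_constrA by blast
  qed
  finally show ?thesis unfolding coset_rep_def .
qed

lemma inj_on_coset_rep_mix_on:
  "inj_on (\<lambda>H. restrict (\<lambda>m. coset_rep Q lo (H m)) R) (mix_on \<gamma> A L R ` coeff_set)"
proof (rule inj_onI, rule ext)
  fix H H' m assume "H \<in> mix_on \<gamma> A L R ` coeff_set" "H' \<in> mix_on \<gamma> A L R ` coeff_set"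
    and eq: "restrict (\<lambda>m. coset_rep Q lo (H m)) R = restrict (\<lambda>m. coset_rep Q lo (H' m)) R"
  then obtain c c' where c: "c \<in> coeff_set" "H = mix_on \<gamma> A L R c"
    and c': "c' \<in> coeff_set" "H' = mix_on \<gamma> A L R c'" by blast
  show "H m = H' m"
  proof (cases "m \<in> R")
    case True
    have "mix \<gamma> A L c m \<in> digits \<gamma> lo top" "mix \<gamma> A L c' m \<in> digits \<gamma> lo top"
      using mix_in_digits c c' by auto
    thus ?thesis
      using fun_cong[OF eq, of m] True c c'
        inj_onD[OF inj_on_coset_rep[where a=lo and b=top and Q=Q, OF nearest lo_le_top top_le_K]]
      by (simp add: mix_on_def)
  qed (use c c' in \<open>simp add: mix_on_def\<close>)
qed

abbreviation zero_coeffs :: "nat \<Rightarrow> nat \<Rightarrow> int" where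
  "zero_coeffs \<equiv> \<lambda>l\<in>{1..L}. \<lambda>j. 0"

lemma card_fiber_mixed:
  assumes t: "t \<in> PiE {1..L} codebook"
  shows "card {t'\<in>PiE {1..L} codebook. restrict (\<lambda>m. mixed m t') R = restrict (\<lambda>m. mixed m t) R}
       = card {c\<in>coeff_set. mix_on \<gamma> A L R c = mix_on \<gamma> A L R zero_coeffs}"
proof -
  have "t \<in> coset_reps ` coeff_set" using t bij_betw_coset_reps by (simp add: bij_betw_def)
  then obtain c where c: "c \<in> coeff_set" "t = coset_reps c" by blast
  have "card {t'\<in>PiE {1..L} codebook. restrict (\<lambda>m. mixed m t') R = restrict (\<lambda>m. mixed m t) R}
      = card {c'\<in>coeff_set. mix_on \<gamma> A L R c' = mix_on \<gamma> A L R c}"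
    unfolding c(2)
    by (rule card_fibers_bij_betw[OF bij_betw_coset_reps c(1) _ inj_on_coset_rep_mix_on])
       (auto simp: mixed_coset_reps mix_on_def)
  also have "\<dots> = card {c'\<in>coeff_set. mix_on \<gamma> A L R c' = mix_on \<gamma> A L R zero_coeffs}"
    using card_mix_on_fiber_le zero_in_coeff_vectors c(1)
    by (intro antisym) auto
  finally show ?thesis .
qed

lemma log_card_fiber:
  "log 2 (card {c\<in>coeff_set. mix_on \<gamma> A L R c = mix_on \<gamma> A L R zero_coeffs})
     = log 2 (card coeff_set) - log 2 (card (mix_on \<gamma> A L R ` coeff_set))"
proof -
  let ?k = "card (mix_on \<gamma> A L R ` coeff_set)"
  let ?a = "card {c\<in>coeff_set. mix_on \<gamma> A L R c = mix_on \<gamma> A L R zero_coeffs}"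
  have "card coeff_set = ?k * ?a"
    by (rule card_coeff_vectors_eq_image_mult_fiber)
  moreover have "card coeff_set > 0"
    using zero_in_coeff_vectors finite_coeff_vectors
    by (auto simp: card_gt_0_iff)
  ultimately show ?thesis by (simp add: log_mult)
qed

lemma log_card_mix_on_image:
  "log 2 (real (card (mix_on \<gamma> A L R ` coeff_set)))
     = (\<Sum>j\<in>{lo<..top}. real (rank_mod \<gamma> A R (users_above L ic j))) * log 2 (real \<gamma>)"
  using card_mix_on_image gamma_pos
  by (simp add: power_sum[symmetric] log_nat_power sum_distrib_right)

theorem cond_entropy_computed:
  assumes S: "S \<subseteq> {1..L}"
  shows "cond_entropy_bits (uniform_dithered {1..L} codebook dither)
           (\<lambda>\<omega>. restrict (\<lambda>m. computed m \<omega>) S) (\<lambda>\<omega>. restrict (\<lambda>m. computed m \<omega>) ({1..L} - S))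
         = (\<Sum>j\<in>{lo<..top}. real (rank_mod \<gamma> A {1..L} (users_above L ic j))
                             - real (rank_mod \<gamma> A ({1..L} - S) (users_above L ic j))) * log 2 (real \<gamma>)"
proof -
  let ?T = "PiE {1..L} codebook"
  let ?X = "\<lambda>R t. restrict (\<lambda>m. mixed m t) R"
  have "cond_entropy_bits (uniform_dithered {1..L} codebook dither)
           (\<lambda>\<omega>. restrict (\<lambda>m. computed m \<omega>) S) (\<lambda>\<omega>. restrict (\<lambda>m. computed m \<omega>) ({1..L} - S))
      = cond_entropy_count ?T (?X S) (?X ({1..L} - S))"
    by (rule cond_entropy_bits_uniform_dithered)
       (use finite_codebook prob_space_dither in \<open>simp_all add: computed_eq_mixed\<close>)
  also have "\<dots> = log 2 (card {c\<in>coeff_set. mix_on \<gamma> A L ({1..L} - S) c = mix_on \<gamma> A L ({1..L} - S) zero_coeffs})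
                 - log 2 (card {c\<in>coeff_set. mix_on \<gamma> A L {1..L} c = mix_on \<gamma> A L {1..L} zero_coeffs})"
  proof (rule cond_entropy_count_const_fibers)
    show "finite ?T" using finite_codebook by (intro finite_PiE) auto
    show "?T \<noteq> {}" using finite_codebook by (simp add: PiE_eq_empty_iff)
  next
    fix t assume t: "t \<in> ?T"
    have "{t'\<in>?T. ?X S t' = ?X S t \<and> ?X ({1..L} - S) t' = ?X ({1..L} - S) t}
        = {t'\<in>?T. ?X {1..L} t' = ?X {1..L} t}"
      using S by (auto simp: restrict_def fun_eq_iff)
    thus "card {t'\<in>?T. ?X S t' = ?X S t \<and> ?X ({1..L} - S) t' = ?X ({1..L} - S) t}
        = card {c\<in>coeff_set. mix_on \<gamma> A L {1..L} c = mix_on \<gamma> A L {1..L} zero_coeffs}"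
      using card_fiber_mixed[OF t] by simp
    show "card {t'\<in>?T. ?X ({1..L} - S) t' = ?X ({1..L} - S) t}
        = card {c\<in>coeff_set. mix_on \<gamma> A L ({1..L} - S) c = mix_on \<gamma> A L ({1..L} - S) zero_coeffs}"
      by (rule card_fiber_mixed[OF t])
  qed
  also have "\<dots> = (\<Sum>j\<in>{lo<..top}. real (rank_mod \<gamma> A {1..L} (users_above L ic j))
                             - real (rank_mod \<gamma> A ({1..L} - S) (users_above L ic j))) * log 2 (real \<gamma>)"
    unfolding log_card_fiber log_card_mix_on_image by (simp add: sum_subtractf left_diff_distrib)
  finally show ?thesis .
qed

end

section \<open>The lattice chain\<close>

lemma chain_le:
  fixes i :: "nat \<Rightarrow> nat"
  assumes mono: "\<forall>k. 1 \<le> k \<and> k < n \<longrightarrow> i k \<le> i (Suc k)" and "1 \<le> k" "k \<le> k'" "k' \<le> n"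
  shows "i k \<le> i k'"
  using assms(3,4)
proof (induction k' rule: dec_induct)
  case (step q)
  thus ?case using mono \<open>1 \<le> k\<close> by (meson Suc_leD le_trans less_eq_Suc_le order.trans)
qed simp

lemma le_chain_iff:
  fixes i :: "nat \<Rightarrow> nat"
  assumes mono: "\<forall>k. 1 \<le> k \<and> k < n \<longrightarrow> i k \<le> i (Suc k)"
    and k: "k \<in> {1..<n}" and j: "j \<in> {i k<..i (Suc k)}" and x: "x \<in> {1..n}"
  shows "j \<le> i x \<longleftrightarrow> i (Suc k) \<le> i x"
proof (cases "x \<le> k")
  case True
  thus ?thesis using chain_le[OF mono, of x k] k j x by auto
next
  case False
  thus ?thesis using chain_le[OF mono, of "Suc k" x] k j x by auto
qed

lemma sum_chain_regroup:
  fixes i :: "nat \<Rightarrow> nat" and g :: "nat \<Rightarrow> real"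
  assumes mono: "\<forall>k. 1 \<le> k \<and> k < n \<longrightarrow> i k \<le> i (Suc k)" and q: "1 \<le> q" "q \<le> n"
  shows "(\<Sum>j\<in>{i 1<..i q}. g j) = (\<Sum>k\<in>{1..<q}. \<Sum>j\<in>{i k<..i (Suc k)}. g j)"
  using q
proof (induction q rule: dec_induct)
  case (step q)
  have "i 1 \<le> i q" "i q \<le> i (Suc q)" using chain_le[OF mono, of 1 q] mono step by auto
  hence "{i 1<..i (Suc q)} = {i 1<..i q} \<union> {i q<..i (Suc q)}" by auto
  hence "(\<Sum>j\<in>{i 1<..i (Suc q)}. g j) = (\<Sum>j\<in>{i 1<..i q}. g j) + (\<Sum>j\<in>{i q<..i (Suc q)}. g j)"
    by (simp add: sum.union_disjoint ivl_disj_int)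
  thus ?case using step by (simp add: sum.atLeastLessThan_Suc)
qed simp

lemma sum_users_above_chain:
  fixes i :: "nat \<Rightarrow> nat" and g :: "nat set \<Rightarrow> real"
  assumes mono: "\<forall>k. 1 \<le> k \<and> k < n \<longrightarrow> i k \<le> i (Suc k)" and n: "1 \<le> n"
    and ic: "\<And>l. l \<in> {1..L} \<Longrightarrow> ic l \<in> i ` {1..n}"
  shows "(\<Sum>j\<in>{i 1<..i n}. g (users_above L ic j))
       = (\<Sum>k\<in>{1..<n}. real (i (Suc k) - i k) * g {l\<in>{1..L}. i (Suc k) \<le> ic l})"
proof -
  have "users_above L ic j = {l\<in>{1..L}. i (Suc k) \<le> ic l}"
    if "k \<in> {1..<n}" "j \<in> {i k<..i (Suc k)}" for k j
    unfolding users_above_def using le_chain_iff[OF mono that] ic by fastforce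
  hence "(\<Sum>k\<in>{1..<n}. \<Sum>j\<in>{i k<..i (Suc k)}. g (users_above L ic j))
      = (\<Sum>k\<in>{1..<n}. \<Sum>j\<in>{i k<..i (Suc k)}. g {l\<in>{1..L}. i (Suc k) \<le> ic l})"
    by (intro sum.cong) auto
  thus ?thesis using sum_chain_regroup[OF mono n order.refl] by simp
qed

lemma common_shaping_eq_first:
  fixes \<Lambda> :: "nat \<Rightarrow> 'a set"
  assumes mono: "\<And>k k'. 1 \<le> k \<Longrightarrow> k \<le> k' \<Longrightarrow> k' \<le> 2 * L \<Longrightarrow> \<Lambda> k \<subseteq> \<Lambda> k'"
    and perm: "\<pi> permutes {1..2 * L}" and L: "L \<ge> 1"
    and nested: "\<forall>l\<in>{1..L}. \<Lambda> (\<pi> (2 * l - 1)) \<subseteq> \<Lambda> (\<pi> (2 * l))"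
    and common: "\<forall>l\<in>{1..L}. \<Lambda> (\<pi> (2 * l - 1)) = \<Lambda> (\<pi> (2 * 1 - 1))"
    and l: "l \<in> {1..L}"
  shows "\<Lambda> (\<pi> (2 * l - 1)) = \<Lambda> 1"
proof -
  have "1 \<in> \<pi> ` {1..2 * L}" using permutes_image[OF perm] L by auto
  then obtain j where j: "j \<in> {1..2 * L}" "\<pi> j = 1" by auto
  have in_range: "\<pi> x \<in> {1..2 * L}" if "x \<in> {1..2 * L}" for x
    using permutes_in_image[OF perm] that by blast
  show ?thesis
  proof (cases "even j")
    case False
    then obtain q where "j = 2 * q + 1" by (metis oddE)
    hence "Suc q \<in> {1..L}" "2 * Suc q - 1 = j" using j by auto
    thus ?thesis using common l j(2) by metis
  next
    case True
    then obtain q where q: "j = 2 * q" by (metis evenE)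
    hence q_in: "q \<in> {1..L}" using j by auto
    txt \<open>User q's coding lattice is the coarsest one, so its shaping lattice is too.\<close>
    have "2 * q - 1 \<in> {1..2 * L}" using q_in by auto
    hence "\<Lambda> 1 \<subseteq> \<Lambda> (\<pi> (2 * q - 1))" using in_range by (intro mono) auto
    moreover have "\<Lambda> (\<pi> (2 * q - 1)) \<subseteq> \<Lambda> (\<pi> (2 * q))" using nested q_in by blast
    ultimately have "\<Lambda> (\<pi> (2 * q - 1)) = \<Lambda> 1" using q j(2) by auto
    thus ?thesis using common l q_in by metis
  qed
qed

theorem theorem8:
  fixes \<gamma> L K :: nat
    and G :: "'n::finite \<Rightarrow> nat \<Rightarrow> int"
    and B :: "real^'n^'n"
    and i :: "nat \<Rightarrow> nat"
    and Q :: "(real^'n) set \<Rightarrow> real^'n \<Rightarrow> real^'n"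
    and \<pi> :: "nat \<Rightarrow> nat"
    and \<beta> :: "nat \<Rightarrow> real"
    and A :: "nat \<Rightarrow> nat \<Rightarrow> int"
  assumes prime: "prime \<gamma>"
    and L_pos: "L \<ge> 1" and K_pos: "K \<ge> 1"
    and G_rank: "rank_mod \<gamma> G UNIV {1..K} = K"
    and B_inv: "invertible B"
    and i_mono: "\<forall>k. 1 \<le> k \<and> k < 2 * L \<longrightarrow> i k \<le> i (Suc k)"
    and i_le: "i (2 * L) \<le> K"
  defines "\<Lambda> \<equiv> \<lambda>k. constrA \<gamma> B G (i k)"
  assumes Q_nearest: "\<forall>k\<in>{1..2 * L}. nearest_quantizer (\<Lambda> k) (Q (\<Lambda> k))"
    and \<pi>_perm: "\<pi> permutes {1..2 * L}"
    and \<pi>_nested: "\<forall>l\<in>{1..L}. \<Lambda> (\<pi> (2 * l - 1)) \<subseteq> \<Lambda> (\<pi> (2 * l))"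
  defines "\<Lambda>s \<equiv> \<lambda>l. \<Lambda> (\<pi> (2 * l - 1))"
    and "\<Lambda>c \<equiv> \<lambda>l. \<Lambda> (\<pi> (2 * l))"
  defines "C \<equiv> \<lambda>l. \<Lambda>c l \<inter> voronoi Q (\<Lambda>s l)"
  assumes \<beta>_pos: "\<forall>l\<in>{1..L}. \<beta> l > 0"
    and A_inv: "\<exists>Ainv :: nat \<Rightarrow> nat \<Rightarrow> int. \<forall>p\<in>{1..L}. \<forall>q\<in>{1..L}.
                  (\<Sum>k\<in>{1..L}. A p k * Ainv k q) mod int \<gamma> = (if p = q then 1 else 0) mod int \<gamma>"
    and common_shaping: "\<forall>l\<in>{1..L}. \<Lambda>s l = \<Lambda>s 1"
  defines "rv \<equiv> \<lambda>k. (1 / real CARD('n)) * log 2 (real (card (\<Lambda> (Suc k) \<inter> voronoi Q (\<Lambda> k))))"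
    and "Lk \<equiv> \<lambda>k. {l\<in>{1..L}. \<Lambda>s l \<subseteq> \<Lambda> k \<and> \<Lambda> k \<subseteq> \<Lambda> (Suc k) \<and> \<Lambda> (Suc k) \<subseteq> \<Lambda>c l}"
  defines "f \<equiv> \<lambda>S. \<Sum>k\<in>{1..2 * L - 1}.
              (real (rank_mod \<gamma> A {1..L} (Lk k)) - real (rank_mod \<gamma> A ({1..L} - S) (Lk k))) * rv k"
  defines "M \<equiv> PiM {1..L} (\<lambda>l. uniform_count_measure (C l) \<Otimes>\<^sub>M
                 uniform_measure lebesgue ((\<lambda>x. (1 / \<beta> l) *\<^sub>R x) ` voronoi Q (\<Lambda>s l)))"
  defines "v \<equiv> \<lambda>m \<omega>. modl Q (\<Lambda> 1)
              (\<Sum>l\<in>{1..L}. of_int (A m l) *\<^sub>R (fst (\<omega> l) - Q (\<Lambda>s l) (fst (\<omega> l) - \<beta> l *\<^sub>R snd (\<omega> l))))"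
  shows "{R \<in> extensional {1..L}. \<forall>S\<subseteq>{1..L}. (\<Sum>m\<in>S. R m) \<ge> f S} =
         {R \<in> extensional {1..L}. \<forall>S\<subseteq>{1..L}. (\<Sum>m\<in>S. R m) \<ge>
            (1 / real CARD('n)) * cond_entropy_bits M (\<lambda>\<omega>. restrict (\<lambda>m. v m \<omega>) S)
                                                     (\<lambda>\<omega>. restrict (\<lambda>m. v m \<omega>) ({1..L} - S))}"
proof -
  interpret constrA_lattices \<gamma> G B K
    using prime B_inv G_rank indep_mod_if_rank_eq_card[OF prime, of "{1..K}" G UNIV]
    by unfold_locales simp_all
  define lo top ic where "lo = i 1" and "top = i (2 * L)" and "ic = (\<lambda>l. i (\<pi> (2 * l)))"
  have i_chain: "i k \<le> i k'" if "1 \<le> k" "k \<le> k'" "k' \<le> 2 * L" for k k'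
    using chain_le[OF i_mono that] .
  have i_K: "i k \<le> K" if "k \<in> {1..2 * L}" for k
    using i_chain[of k "2 * L"] i_le that by auto
  have \<pi>_in: "\<pi> (2 * l) \<in> {1..2 * L}" if "l \<in> {1..L}" for l
    using permutes_in_image[OF \<pi>_perm] that by auto
  have chain_mono: "lat (i k) \<subseteq> lat (i k')" if "1 \<le> k" "k \<le> k'" "k' \<le> 2 * L" for k k'
    using constrA_mono i_chain[OF that] by blast
  have shaping: "\<Lambda>s l = lat lo" if "l \<in> {1..L}" for l
    using common_shaping_eq_first[where \<Lambda>="\<lambda>k. lat (i k)", OF chain_mono \<pi>_perm L_pos
        \<pi>_nested[unfolded \<Lambda>_def] common_shaping[unfolded \<Lambda>s_def \<Lambda>_def] that]
    unfolding \<Lambda>s_def \<Lambda>_def lo_def .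
  interpret common_shaping \<gamma> G B K L lo top ic Q \<beta> A
  proof unfold_locales
    show "nearest_quantizer (lat lo) (Q (lat lo))"
      using Q_nearest L_pos unfolding \<Lambda>_def lo_def by auto
    show "lo \<le> ic l \<and> ic l \<le> top" if "l \<in> {1..L}" for l
      using i_chain \<pi>_in[OF that] unfolding lo_def top_def ic_def by auto
  qed (use i_chain i_le L_pos \<beta>_pos in \<open>auto simp: lo_def top_def\<close>)
  have M_eq: "M = uniform_dithered {1..L} codebook dither"
    unfolding M_def uniform_dithered_def codebook_def dither_def C_def
    by (intro PiM_cong refl) (simp add: shaping \<Lambda>c_def \<Lambda>_def ic_def)
  have v_eq: "v m \<omega> = computed m \<omega>" for m \<omega>
  proof -
    have "(\<Sum>l\<in>{1..L}. of_int (A m l) *\<^sub>R (fst (\<omega> l) - Q (\<Lambda>s l) (fst (\<omega> l) - \<beta> l *\<^sub>R snd (\<omega> l))))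
        = (\<Sum>l\<in>{1..L}. of_int (A m l) *\<^sub>R (fst (\<omega> l) - Q (lat lo) (fst (\<omega> l) - \<beta> l *\<^sub>R snd (\<omega> l))))"
      by (rule sum.cong) (simp_all add: shaping)
    thus ?thesis unfolding v_def computed_def by (simp add: \<Lambda>_def lo_def)
  qed
  have rv_eq: "rv k = real (i (Suc k) - i k) * log 2 (real \<gamma>) / real CARD('n)"
    if "k \<in> {1..<2 * L}" for k
  proof -
    have "nearest_quantizer (lat (i k)) (Q (lat (i k)))"
      using Q_nearest that unfolding \<Lambda>_def by auto
    moreover have "i k \<le> i (Suc k)" "i (Suc k) \<le> K" using that by (auto intro!: i_chain i_K)
    ultimately have "card (\<Lambda> (Suc k) \<inter> voronoi Q (\<Lambda> k)) = \<gamma> ^ (i (Suc k) - i k)"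
      unfolding \<Lambda>_def by (rule card_constrA_inter_voronoi)
    thus ?thesis unfolding rv_def using gamma_pos by (simp add: log_nat_power)
  qed
  have Lk_eq: "Lk k = {l\<in>{1..L}. i (Suc k) \<le> ic l}" if "k \<in> {1..<2 * L}" for k
  proof -
    have "\<Lambda> (Suc k) \<subseteq> \<Lambda>c l \<longleftrightarrow> i (Suc k) \<le> ic l" if "l \<in> {1..L}" for l
      unfolding \<Lambda>_def \<Lambda>c_def ic_def using \<pi>_in[OF that] \<open>k \<in> {1..<2 * L}\<close>
      by (intro constrA_subset_iff i_K) auto
    moreover have "\<Lambda>s l \<subseteq> \<Lambda> k \<and> \<Lambda> k \<subseteq> \<Lambda> (Suc k)" if "l \<in> {1..L}" for l
      unfolding shaping[OF that] \<Lambda>_def lo_def using \<open>k \<in> {1..<2 * L}\<close>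
      by (intro conjI constrA_mono i_chain) auto
    ultimately show ?thesis unfolding Lk_def by blast
  qed
  have f_eq: "f S = (1 / real CARD('n)) *
      ((\<Sum>j\<in>{lo<..top}. real (rank_mod \<gamma> A {1..L} (users_above L ic j))
                         - real (rank_mod \<gamma> A ({1..L} - S) (users_above L ic j))) * log 2 (real \<gamma>))" for S
  proof -
    let ?g = "\<lambda>J. real (rank_mod \<gamma> A {1..L} J) - real (rank_mod \<gamma> A ({1..L} - S) J)"
    have "{1..2 * L - 1} = {1..<2 * L}" using L_pos by auto
    hence "f S = (\<Sum>k\<in>{1..<2 * L}. ?g (Lk k) * rv k)" unfolding f_def by simp
    also have "\<dots> = (\<Sum>k\<in>{1..<2 * L}. real (i (Suc k) - i k) * ?g {l\<in>{1..L}. i (Suc k) \<le> ic l}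
                       * (log 2 (real \<gamma>) / real CARD('n)))"
      by (intro sum.cong refl) (simp add: rv_eq Lk_eq)
    also have "\<dots> = (\<Sum>k\<in>{1..<2 * L}. real (i (Suc k) - i k) * ?g {l\<in>{1..L}. i (Suc k) \<le> ic l})
        * log 2 (real \<gamma>) / real CARD('n)"
      by (simp add: sum_distrib_right sum_divide_distrib)
    also have "(\<Sum>k\<in>{1..<2 * L}. real (i (Suc k) - i k) * ?g {l\<in>{1..L}. i (Suc k) \<le> ic l})
        = (\<Sum>j\<in>{lo<..top}. ?g (users_above L ic j))"
      unfolding lo_def top_def
      by (rule sum_users_above_chain[OF i_mono, symmetric]) (use L_pos \<pi>_in in \<open>auto simp: ic_def\<close>)
    finally show ?thesis by simp
  qed
  show ?thesis
    using cond_entropy_computed by (auto simp: M_eq v_eq f_eq)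
qed


end
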